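(* Consider the setting described in the context. Assume (C1), (C2), (C3), that $X$ and $XY^{(\ell)}$, $\ell=1,\dots,k$, have finite second-order moments, and that ${\rm var}(X\mid Z=z)$ is positive definite for every $z\in\mathcal Z$. Then for every $z\in\mathcal Z$ and every $t\in\{1,\dots,k\}$, $\widehat\beta_t(z)=\beta_t(z)+o_p(1)$ and $\widehat\beta(z)=\beta(z)+o_p(1)$ as $n\to\infty$, where $\beta_t(z)=\{{\rm var}(X\mid Z=z)\}^{-1}{\rm cov}(X,Y^{(t)}\mid Z=z)$ and $\beta(z)=\sum_{\ell=1}^k\pi_\ell\beta_\ell(z)$.
   Context: Setting: a trial compares $k\ge2$ treatments (fixed) with known assignment proportions $\pi_1,\dots,\pi_k\in(0,1)$, $\sum_t\pi_t=1$. Let $e_t$ be the $t$-th unit vector in $\mathbb R^k$. For patient $i=1,\dots,n$: $I_i\in\{e_1,\dots,e_k\}$ is the treatment indicator, $Y_i^{(1)},\dots,Y_i^{(k)}$ are potential responses, $W_i$ the observed covariate vector, $Z_i$ a discrete function of $W_i$ used in randomization, $X_i$ a vector-valued function of $W_i$. Observed $Y_i=Y_i^{(t)}$ iff $I_i=e_t$. Generic variables $(Y^{(1)},\dots,Y^{(k)},W)$, $Z$, $X$. Conditions: (C1) $(Y_i^{(1)},\dots,Y_i^{(k)},W_i)$, $i=1,\dots,n$, are i.i.d. as $(Y^{(1)},\dots,Y^{(k)},W)$, each $Y^{(t)}$ with finite second moments. (C2) $(I_1,\dots,I_n)$ and $\{(Y_i^{(1)},\dots,Y_i^{(k)},W_i)\}_{i}$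 are conditionally independent given $Z_1,\dots,Z_n$. (C3) $Z$ takes finitely many values in $\mathcal Z$; ${\rm pr}(I_i=e_t\mid Z_1,\dots,Z_n)=\pi_t$ for all $t,i$; and for every $z\in\mathcal Z$ and $t$, $D_t(z)/n(z)\to0$ in probability, where $n(z)=\#\{i:Z_i=z\}$, $n_t(z)=\#\{i:Z_i=z,I_i=e_t\}$, $D_t(z)=n_t(z)-\pi_tn(z)$. Estimators: $\bar X_t(z)$ is the sample mean of $X_i$ over $\{i:I_i=e_t,Z_i=z\}$; $\widehat\beta_t(z)=\big[\sum_{i:I_i=e_t,Z_i=z}\{X_i-\bar X_t(z)\}\{X_i-\bar X_t(z)\}^T\big]^{-1}\sum_{i:I_i=e_t,Z_i=z}\{X_i-\bar X_t(z)\}Y_i$; $\widehat\beta(z)=\big[\sum_{\ell=1}^k\sum_{i:I_i=e_\ell,Z_i=z}\{X_i-\bar X_\ell(z)\}\{X_i-\bar X_\ell(z)\}^T\big]^{-1}\sum_{\ell=1}^k\sum_{i:I_i=e_\ell,Z_i=z}\{X_i-\bar X_\ell(z)\}Y_i$. *)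

theory Defs
  imports "HOL-Probability.Probability"
begin

definition outer :: "real^'p \<Rightarrow> real^'p \<Rightarrow> real^'p^'p" where
  "outer x y = (\<chi> i j. x $ i * y $ j)"

(* Matrix inverse; when the matrix is singular the estimator is undefined in the
   paper, here we use the convention 0. *)
definition inv0 :: "real^'p^'p \<Rightarrow> real^'p^'p" where
  "inv0 A = (if invertible A then matrix_inv A else 0)"

definition posdef :: "real^'p^'p \<Rightarrow> bool" where
  "posdef A \<longleftrightarrow> (\<forall>v. v \<noteq> 0 \<longrightarrow> v \<bullet> (A *v v) > 0)"

definition conv_in_prob ::
  "'a measure \<Rightarrow> (nat \<Rightarrow> 'a \<Rightarrow> 'b::metric_space) \<Rightarrow> 'b \<Rightarrow> bool" where
  "conv_in_prob M f c \<longleftrightarrow> (\<forall>n. f n \<in> borel_measurable M) \<and>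
     (\<forall>e>0. (\<lambda>n. measure M {\<omega> \<in> space M. dist (f n \<omega>) c > e}) \<longlonglongrightarrow> 0)"

definition cond_indep_disc ::
  "'a measure \<Rightarrow> ('a \<Rightarrow> 'b) \<Rightarrow> 'b measure \<Rightarrow> ('a \<Rightarrow> 'c) \<Rightarrow> 'c measure \<Rightarrow> ('a \<Rightarrow> 'd) \<Rightarrow> bool" where
  "cond_indep_disc M X MX Y MY Z \<longleftrightarrow>
     (\<forall>A\<in>sets MX. \<forall>B\<in>sets MY. \<forall>z.
        measure M {\<omega>\<in>space M. X \<omega> \<in> A \<and> Y \<omega> \<in> B \<and> Z \<omega> = z} * measure M {\<omega>\<in>space M. Z \<omega> = z}
      = measure M {\<omega>\<in>space M. X \<omega> \<in> A \<and> Z \<omega> = z} * measure M {\<omega>\<in>space M. Y \<omega> \<in> B \<and> Z \<omega> = z})"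

definition cond_mean :: "'a measure \<Rightarrow> ('a \<Rightarrow> 'b::{banach,second_countable_topology}) \<Rightarrow> ('a \<Rightarrow> 'z) \<Rightarrow> 'z \<Rightarrow> 'b" where
  "cond_mean M V Z z =
     (1 / measure M {\<omega>\<in>space M. Z \<omega> = z}) *\<^sub>R
       (LINT \<omega>|M. indicator {\<omega>\<in>space M. Z \<omega> = z} \<omega> *\<^sub>R V \<omega>)"

definition cond_var :: "'a measure \<Rightarrow> ('a \<Rightarrow> real^'p) \<Rightarrow> ('a \<Rightarrow> 'z) \<Rightarrow> 'z \<Rightarrow> real^'p^'p" where
  "cond_var M X Z z = cond_mean M (\<lambda>\<omega>. outer (X \<omega> - cond_mean M X Z z) (X \<omega> - cond_mean M X Z z)) Z z"

definition cond_cov :: "'a measure \<Rightarrow> ('a \<Rightarrow> real^'p) \<Rightarrow> ('a \<Rightarrow> real) \<Rightarrow> ('a \<Rightarrow> 'z) \<Rightarrow> 'z \<Rightarrow> real^'p" where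
  "cond_cov M X Y Z z = cond_mean M (\<lambda>\<omega>. (Y \<omega> - cond_mean M Y Z z) *\<^sub>R (X \<omega> - cond_mean M X Z z)) Z z"

(* Sample: the patients i < n with I_i = e_t and Z_i = z *)
definition samp :: "(nat \<Rightarrow> 'k) \<Rightarrow> (nat \<Rightarrow> 'z) \<Rightarrow> nat \<Rightarrow> 'k \<Rightarrow> 'z \<Rightarrow> nat set" where
  "samp I Z n t z = {i. i < n \<and> I i = t \<and> Z i = z}"

definition xbar :: "(nat \<Rightarrow> real^'p) \<Rightarrow> nat set \<Rightarrow> real^'p" where
  "xbar X S = (1 / real (card S)) *\<^sub>R (\<Sum>i\<in>S. X i)"

definition Sxx :: "(nat \<Rightarrow> real^'p) \<Rightarrow> nat set \<Rightarrow> real^'p^'p" where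
  "Sxx X S = (\<Sum>i\<in>S. outer (X i - xbar X S) (X i - xbar X S))"

definition Sxy :: "(nat \<Rightarrow> real^'p) \<Rightarrow> (nat \<Rightarrow> real) \<Rightarrow> nat set \<Rightarrow> real^'p" where
  "Sxy X Y S = (\<Sum>i\<in>S. Y i *\<^sub>R (X i - xbar X S))"

definition betahat_t :: "(nat \<Rightarrow> 'k) \<Rightarrow> (nat \<Rightarrow> 'z) \<Rightarrow> (nat \<Rightarrow> real^'p) \<Rightarrow> (nat \<Rightarrow> real)
    \<Rightarrow> nat \<Rightarrow> 'k \<Rightarrow> 'z \<Rightarrow> real^'p" where
  "betahat_t I Z X Y n t z =
     inv0 (Sxx X (samp I Z n t z)) *v Sxy X Y (samp I Z n t z)"

definition betahat :: "(nat \<Rightarrow> 'k::finite) \<Rightarrow> (nat \<Rightarrow> 'z) \<Rightarrow> (nat \<Rightarrow> real^'p) \<Rightarrow> (nat \<Rightarrow> real)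
    \<Rightarrow> nat \<Rightarrow> 'z \<Rightarrow> real^'p" where
  "betahat I Z X Y n z =
     inv0 (\<Sum>l\<in>UNIV. Sxx X (samp I Z n l z)) *v (\<Sum>l\<in>UNIV. Sxy X Y (samp I Z n l z))"

end

theory Submission
  imports Defs
begin

section \<open>Convergence in probability\<close>

lemma (in finite_measure) tendsto_measure_zero_cover:
  assumes fin: "finite \<B>" and sets: "\<And>B n. B \<in> \<B> \<Longrightarrow> B n \<in> sets M"
    and lim: "\<And>B. B \<in> \<B> \<Longrightarrow> (\<lambda>n. measure M (B n)) \<longlonglongrightarrow> 0"
    and cover: "\<And>n. A n \<subseteq> (\<Union>B\<in>\<B>. B n)"
  shows "(\<lambda>n. measure M (A n)) \<longlonglongrightarrow> 0"
proof (rule tendsto_sandwich[OF _ _ tendsto_const])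
  show "\<forall>\<^sub>F n in sequentially. 0 \<le> measure M (A n)" by simp
  show "\<forall>\<^sub>F n in sequentially. measure M (A n) \<le> (\<Sum>B\<in>\<B>. measure M (B n))"
  proof (intro always_eventually allI)
    fix n
    have "measure M (A n) \<le> measure M (\<Union>B\<in>\<B>. B n)"
      using fin sets cover by (intro finite_measure_mono) auto
    also have "\<dots> \<le> (\<Sum>B\<in>\<B>. measure M (B n))"
      using fin sets by (intro measure_UNION_le) auto
    finally show "measure M (A n) \<le> (\<Sum>B\<in>\<B>. measure M (B n))" .
  qed
  show "(\<lambda>n. \<Sum>B\<in>\<B>. measure M (B n)) \<longlonglongrightarrow> 0"
    using lim by (rule tendsto_null_sum)
qed

lemma (in finite_measure) tendsto_measure_zero_subset:
  assumes "\<And>n. B n \<in> sets M" "(\<lambda>n. measure M (B n)) \<longlonglongrightarrow> 0" "\<And>n. A n \<subseteq> B n"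
  shows "(\<lambda>n. measure M (A n)) \<longlonglongrightarrow> 0"
  by (rule tendsto_measure_zero_cover[where \<B> = "{B}"]) (use assms in auto)

lemma conv_in_prob_measurable: "conv_in_prob M f c \<Longrightarrow> f n \<in> borel_measurable M"
  by (simp add: conv_in_prob_def)

lemma conv_in_prob_tail:
  "conv_in_prob M f c \<Longrightarrow> e > 0 \<Longrightarrow> (\<lambda>n. measure M {\<omega> \<in> space M. dist (f n \<omega>) c > e}) \<longlonglongrightarrow> 0"
  by (simp add: conv_in_prob_def)

lemma conv_in_prob_const: "conv_in_prob M (\<lambda>n \<omega>. c) c"
  by (simp add: conv_in_prob_def)

lemma conv_in_prob_eventually_cong:
  assumes f: "conv_in_prob M f c" and g: "\<And>n. g n \<in> borel_measurable M"
    and eq: "eventually (\<lambda>n. \<forall>\<omega>\<in>space M. f n \<omega> = g n \<omega>) sequentially"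
  shows "conv_in_prob M g c"
  unfolding conv_in_prob_def
proof (intro conjI allI impI g)
  fix e :: real assume "e > 0"
  have "\<forall>\<^sub>F n in sequentially.
      measure M {\<omega> \<in> space M. dist (f n \<omega>) c > e} = measure M {\<omega> \<in> space M. dist (g n \<omega>) c > e}"
  proof (rule eventually_mono[OF eq])
    fix n assume "\<forall>\<omega>\<in>space M. f n \<omega> = g n \<omega>"
    then have "{\<omega> \<in> space M. dist (f n \<omega>) c > e} = {\<omega> \<in> space M. dist (g n \<omega>) c > e}" by auto
    then show "measure M {\<omega> \<in> space M. dist (f n \<omega>) c > e} = measure M {\<omega> \<in> space M. dist (g n \<omega>) c > e}"
      by simp
  qed
  with conv_in_prob_tail[OF f \<open>e > 0\<close>]
  show "(\<lambda>n. measure M {\<omega> \<in> space M. dist (g n \<omega>) c > e}) \<longlonglongrightarrow> 0"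
    by (simp add: tendsto_cong)
qed

lemma (in finite_measure) conv_in_prob_continuous_map:
  fixes f :: "nat \<Rightarrow> 'a \<Rightarrow> 'b::{metric_space, second_countable_topology}"
  assumes f: "conv_in_prob M f c" and h: "isCont h c"
    and meas: "\<And>n. (\<lambda>\<omega>. h (f n \<omega>)) \<in> borel_measurable M"
  shows "conv_in_prob M (\<lambda>n \<omega>. h (f n \<omega>)) (h c)"
  unfolding conv_in_prob_def
proof (intro conjI allI impI meas)
  fix e :: real assume "e > 0"
  then obtain d where "d > 0" and d: "\<And>x. dist x c < d \<Longrightarrow> dist (h x) (h c) < e"
    using h unfolding continuous_at_eps_delta by blast
  have [measurable]: "f n \<in> borel_measurable M" for n
    using f by (rule conv_in_prob_measurable)
  show "(\<lambda>n. measure M {\<omega> \<in> space M. dist (h (f n \<omega>)) (h c) > e}) \<longlonglongrightarrow> 0"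
  proof (rule tendsto_measure_zero_subset)
    show "(\<lambda>n. measure M {\<omega> \<in> space M. dist (f n \<omega>) c > d / 2}) \<longlonglongrightarrow> 0"
      using \<open>d > 0\<close> by (intro conv_in_prob_tail[OF f]) simp
    show "{\<omega> \<in> space M. dist (h (f n \<omega>)) (h c) > e} \<subseteq> {\<omega> \<in> space M. dist (f n \<omega>) c > d / 2}" for n
    proof safe
      fix \<omega> assume "e < dist (h (f n \<omega>)) (h c)"
      then have "\<not> dist (f n \<omega>) c < d" using d by force
      with \<open>d > 0\<close> show "d / 2 < dist (f n \<omega>) c" by simp
    qed
  qed measurable
qed

lemma (in finite_measure) conv_in_prob_Pair:
  fixes f :: "nat \<Rightarrow> 'a \<Rightarrow> 'b::{metric_space, second_countable_topology}"
    and g :: "nat \<Rightarrow> 'a \<Rightarrow> 'c::{metric_space, second_countable_topology}"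
  assumes f: "conv_in_prob M f c" and g: "conv_in_prob M g d"
  shows "conv_in_prob M (\<lambda>n \<omega>. (f n \<omega>, g n \<omega>)) (c, d)"
  unfolding conv_in_prob_def
proof (intro conjI allI impI)
  have [measurable]: "f n \<in> borel_measurable M" "g n \<in> borel_measurable M" for n
    using conv_in_prob_measurable[OF f] conv_in_prob_measurable[OF g] by auto
  show "(\<lambda>\<omega>. (f n \<omega>, g n \<omega>)) \<in> borel_measurable M" for n
    using conv_in_prob_measurable[OF f] conv_in_prob_measurable[OF g] by (rule borel_measurable_Pair)
  fix e :: real assume "e > 0"
  define Bf where "Bf n = {\<omega> \<in> space M. dist (f n \<omega>) c > e / 2}" for n
  define Bg where "Bg n = {\<omega> \<in> space M. dist (g n \<omega>) d > e / 2}" for n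
  have sets_B: "Bf n \<in> sets M" "Bg n \<in> sets M" for n
    unfolding Bf_def Bg_def by measurable
  show "(\<lambda>n. measure M {\<omega> \<in> space M. dist (f n \<omega>, g n \<omega>) (c, d) > e}) \<longlonglongrightarrow> 0"
  proof (rule tendsto_measure_zero_cover[where \<B> = "{Bf, Bg}"])
    have "(\<lambda>n. measure M (Bf n)) \<longlonglongrightarrow> 0"
      unfolding Bf_def using \<open>e > 0\<close> by (intro conv_in_prob_tail[OF f] half_gt_zero)
    moreover have "(\<lambda>n. measure M (Bg n)) \<longlonglongrightarrow> 0"
      unfolding Bg_def using \<open>e > 0\<close> by (intro conv_in_prob_tail[OF g] half_gt_zero)
    ultimately show "(\<lambda>n. measure M (B n)) \<longlonglongrightarrow> 0" if "B \<in> {Bf, Bg}" for B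
      using that by blast
    show "{\<omega> \<in> space M. dist (f n \<omega>, g n \<omega>) (c, d) > e} \<subseteq> (\<Union>B\<in>{Bf, Bg}. B n)" for n
    proof (rule subsetI)
      fix \<omega> assume \<omega>: "\<omega> \<in> {\<omega> \<in> space M. dist (f n \<omega>, g n \<omega>) (c, d) > e}"
      have "dist (f n \<omega>, g n \<omega>) (c, d) \<le> dist (f n \<omega>) c + dist (g n \<omega>) d"
        unfolding dist_Pair_Pair by (rule sqrt_sum_squares_le_sum) auto
      with \<omega> have "\<omega> \<in> Bf n \<or> \<omega> \<in> Bg n" by (auto simp: Bf_def Bg_def)
      then show "\<omega> \<in> (\<Union>B\<in>{Bf, Bg}. B n)" by blast
    qed
  qed (auto simp: sets_B)
qed

lemma (in finite_measure) conv_in_prob_euclidean: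
  fixes f :: "nat \<Rightarrow> 'a \<Rightarrow> 'b::euclidean_space"
  assumes meas: "\<And>n. f n \<in> borel_measurable M"
    and comp: "\<And>b. b \<in> Basis \<Longrightarrow> conv_in_prob M (\<lambda>n \<omega>. f n \<omega> \<bullet> b) (c \<bullet> b)"
  shows "conv_in_prob M f c"
  unfolding conv_in_prob_def
proof (intro conjI allI impI meas)
  fix e :: real assume "e > 0"
  define e' where "e' = e / DIM('b)"
  have "e' > 0" using \<open>e > 0\<close> by (simp add: e'_def)
  define B where "B b n = {\<omega> \<in> space M. dist (f n \<omega> \<bullet> b) (c \<bullet> b) > e'}" for b n
  show "(\<lambda>n. measure M {\<omega> \<in> space M. dist (f n \<omega>) c > e}) \<longlonglongrightarrow> 0"
  proof (rule tendsto_measure_zero_cover[where \<B> = "B ` Basis"])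
    show "(\<lambda>n. measure M (B' n)) \<longlonglongrightarrow> 0" if "B' \<in> B ` Basis" for B'
      using that conv_in_prob_tail[OF comp] \<open>e' > 0\<close> by (auto simp: B_def)
    show "B' n \<in> sets M" if "B' \<in> B ` Basis" for B' n
    proof -
      have [measurable]: "f n \<in> borel_measurable M" by (rule meas)
      from that show ?thesis by (auto simp: B_def)
    qed
    show "{\<omega> \<in> space M. dist (f n \<omega>) c > e} \<subseteq> (\<Union>B'\<in>B ` Basis. B' n)" for n
    proof (rule subsetI, rule ccontr)
      fix \<omega> assume \<omega>: "\<omega> \<in> {\<omega> \<in> space M. dist (f n \<omega>) c > e}" "\<omega> \<notin> (\<Union>B'\<in>B ` Basis. B' n)"
      then have "\<bar>(f n \<omega> - c) \<bullet> b\<bar> \<le> e'" if "b \<in> Basis" for b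
        using that by (auto simp: B_def dist_real_def inner_diff_left not_less)
      then have "dist (f n \<omega>) c \<le> (\<Sum>b\<in>(Basis::'b set). e')"
        unfolding dist_norm by (intro order_trans[OF norm_le_l1] sum_mono) auto
      with \<omega> show False by (simp add: e'_def)
    qed
  qed simp
qed

lemma (in finite_measure) conv_in_prob_add:
  fixes f g :: "nat \<Rightarrow> 'a \<Rightarrow> 'b::{real_normed_vector, second_countable_topology}"
  assumes f: "conv_in_prob M f c" and g: "conv_in_prob M g d"
  shows "conv_in_prob M (\<lambda>n \<omega>. f n \<omega> + g n \<omega>) (c + d)"
proof -
  have [measurable]: "f n \<in> borel_measurable M" "g n \<in> borel_measurable M" for n
    using conv_in_prob_measurable[OF f] conv_in_prob_measurable[OF g] by auto
  have "conv_in_prob M (\<lambda>n \<omega>. (\<lambda>p. fst p + snd p) (f n \<omega>, g n \<omega>)) ((\<lambda>p. fst p + snd p) (c, d))"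
    by (rule conv_in_prob_continuous_map[OF conv_in_prob_Pair[OF f g]]) (auto intro!: continuous_intros)
  then show ?thesis by simp
qed

lemma (in finite_measure) conv_in_prob_sum:
  fixes f :: "'i \<Rightarrow> nat \<Rightarrow> 'a \<Rightarrow> 'b::{real_normed_vector, second_countable_topology}"
  assumes "finite I" and "\<And>i. i \<in> I \<Longrightarrow> conv_in_prob M (f i) (c i)"
  shows "conv_in_prob M (\<lambda>n \<omega>. \<Sum>i\<in>I. f i n \<omega>) (\<Sum>i\<in>I. c i)"
  using assms by (induction I rule: finite_induct) (auto intro: conv_in_prob_add conv_in_prob_const)

lemma (in prob_space) prob_dist_gt_le_approx:
  fixes S A B :: "'a \<Rightarrow> real"
  assumes [measurable]: "S \<in> borel_measurable M" "A \<in> borel_measurable M"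
    and B: "integrable M B" and SAB: "\<And>\<omega>. \<omega> \<in> space M \<Longrightarrow> \<bar>S \<omega> - A \<omega>\<bar> \<le> B \<omega>" and "e > 0"
  shows "prob {\<omega> \<in> space M. dist (S \<omega>) 0 > e}
    \<le> prob {\<omega> \<in> space M. dist (A \<omega>) 0 > e / 2} + expectation B / (e / 2)"
proof -
  have [measurable]: "B \<in> borel_measurable M"
    using B by simp
  have "{\<omega> \<in> space M. dist (S \<omega>) 0 > e}
      \<subseteq> {\<omega> \<in> space M. dist (A \<omega>) 0 > e / 2} \<union> {\<omega> \<in> space M. B \<omega> \<ge> e / 2}"
  proof (intro subsetI)
    fix \<omega> assume \<omega>: "\<omega> \<in> {\<omega> \<in> space M. dist (S \<omega>) 0 > e}"
    then have "\<bar>S \<omega>\<bar> \<le> \<bar>A \<omega>\<bar> + B \<omega>"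
      using SAB[of \<omega>] abs_triangle_ineq[of "A \<omega>" "S \<omega> - A \<omega>"] by simp
    with \<omega> show "\<omega> \<in> {\<omega> \<in> space M. dist (A \<omega>) 0 > e / 2} \<union> {\<omega> \<in> space M. B \<omega> \<ge> e / 2}"
      by (auto simp: dist_real_def)
  qed
  then have "prob {\<omega> \<in> space M. dist (S \<omega>) 0 > e}
      \<le> prob {\<omega> \<in> space M. dist (A \<omega>) 0 > e / 2} + prob {\<omega> \<in> space M. B \<omega> \<ge> e / 2}"
    by (intro order_trans[OF finite_measure_mono measure_Un_le]) measurable
  also have "prob {\<omega> \<in> space M. B \<omega> \<ge> e / 2} \<le> expectation B / (e / 2)"
    using SAB \<open>e > 0\<close> by (intro integral_Markov_inequality_measure[OF B, where A = "space M"])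
      (auto intro!: AE_I2 intro: order_trans[OF abs_ge_zero])
  finally show ?thesis
    by simp
qed

lemma (in prob_space) conv_in_prob_zero_L1_approx:
  fixes S :: "nat \<Rightarrow> 'a \<Rightarrow> real"
  assumes S: "\<And>n. S n \<in> borel_measurable M"
    and approx: "\<And>\<delta>. \<delta> > 0 \<Longrightarrow> \<exists>A B. conv_in_prob M A 0
       \<and> (\<forall>n. integrable M (B n) \<and> expectation (B n) \<le> \<delta>)
       \<and> (\<forall>n. \<forall>\<omega>\<in>space M. \<bar>S n \<omega> - A n \<omega>\<bar> \<le> B n \<omega>)"
  shows "conv_in_prob M S 0"
  unfolding conv_in_prob_def
proof (intro conjI allI impI S)
  fix e :: real assume "e > 0"
  show "(\<lambda>n. prob {\<omega> \<in> space M. dist (S n \<omega>) 0 > e}) \<longlonglongrightarrow> 0"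
  proof (rule tendstoI)
    fix \<eta> :: real assume "\<eta> > 0"
    then have "\<eta> * e / 4 > 0"
      using \<open>e > 0\<close> by simp
    from approx[OF this] obtain A B where A: "conv_in_prob M A 0"
      and B: "\<And>n. integrable M (B n)" "\<And>n. expectation (B n) \<le> \<eta> * e / 4"
      and SAB: "\<And>n \<omega>. \<omega> \<in> space M \<Longrightarrow> \<bar>S n \<omega> - A n \<omega>\<bar> \<le> B n \<omega>"
      by blast
    have "eventually (\<lambda>n. prob {\<omega> \<in> space M. dist (A n \<omega>) 0 > e / 2} < \<eta> / 2) sequentially"
      using conv_in_prob_tail[OF A, of "e / 2"] \<open>e > 0\<close> \<open>\<eta> > 0\<close> by (intro order_tendstoD(2)) auto
    then show "eventually (\<lambda>n. dist (prob {\<omega> \<in> space M. dist (S n \<omega>) 0 > e}) 0 < \<eta>) sequentially"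
    proof eventually_elim
      case (elim n)
      have "prob {\<omega> \<in> space M. dist (S n \<omega>) 0 > e}
          \<le> prob {\<omega> \<in> space M. dist (A n \<omega>) 0 > e / 2} + expectation (B n) / (e / 2)"
        by (rule prob_dist_gt_le_approx[OF S conv_in_prob_measurable[OF A] B(1) SAB \<open>e > 0\<close>])
      moreover have "expectation (B n) / (e / 2) \<le> (\<eta> * e / 4) / (e / 2)"
        using B(2)[of n] \<open>e > 0\<close> by (intro divide_right_mono) auto
      moreover have "(\<eta> * e / 4) / (e / 2) = \<eta> / 2"
        using \<open>e > 0\<close> by simp
      ultimately have "prob {\<omega> \<in> space M. dist (S n \<omega>) 0 > e} < \<eta>"
        using elim by linarith
      then show ?case
        by simp
    qed
  qed
qed

lemma (in prob_space) conv_in_prob_zero_if_second_moment: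
  fixes S :: "nat \<Rightarrow> 'a \<Rightarrow> real"
  assumes [measurable]: "\<And>n. S n \<in> borel_measurable M"
    and int: "\<And>n. integrable M (\<lambda>\<omega>. (S n \<omega>)\<^sup>2)"
    and lim: "(\<lambda>n. expectation (\<lambda>\<omega>. (S n \<omega>)\<^sup>2)) \<longlonglongrightarrow> 0"
  shows "conv_in_prob M S 0"
  unfolding conv_in_prob_def
proof (intro conjI allI impI assms(1))
  fix e :: real assume "e > 0"
  show "(\<lambda>n. prob {\<omega> \<in> space M. dist (S n \<omega>) 0 > e}) \<longlonglongrightarrow> 0"
  proof (rule tendsto_sandwich[OF _ _ tendsto_const tendsto_divide_zero[OF lim]])
    show "\<forall>\<^sub>F n in sequentially. 0 \<le> prob {\<omega> \<in> space M. dist (S n \<omega>) 0 > e}"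
      by simp
    show "\<forall>\<^sub>F n in sequentially. prob {\<omega> \<in> space M. dist (S n \<omega>) 0 > e} \<le> expectation (\<lambda>\<omega>. (S n \<omega>)\<^sup>2) / e\<^sup>2"
    proof (intro always_eventually allI)
      fix n
      have "prob {\<omega> \<in> space M. dist (S n \<omega>) 0 > e} \<le> prob {\<omega> \<in> space M. (S n \<omega>)\<^sup>2 \<ge> e\<^sup>2}"
        using \<open>e > 0\<close> by (intro finite_measure_mono) (auto simp: abs_le_square_iff[symmetric])
      also have "\<dots> \<le> expectation (\<lambda>\<omega>. (S n \<omega>)\<^sup>2) / e\<^sup>2"
        using int \<open>e > 0\<close> by (intro integral_Markov_inequality_measure[where A = "space M"]) auto
      finally show "prob {\<omega> \<in> space M. dist (S n \<omega>) 0 > e} \<le> expectation (\<lambda>\<omega>. (S n \<omega>)\<^sup>2) / e\<^sup>2" .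
    qed
  qed
qed

lemma (in prob_space) integral_square_avg_orthogonal:
  fixes U :: "nat \<Rightarrow> nat \<Rightarrow> 'a \<Rightarrow> real"
  assumes [measurable]: "\<And>i. U n i \<in> borel_measurable M"
    and bound: "\<And>i \<omega>. \<omega> \<in> space M \<Longrightarrow> \<bar>U n i \<omega>\<bar> \<le> C"
    and orth: "\<And>i j. i < n \<Longrightarrow> j < n \<Longrightarrow> i \<noteq> j \<Longrightarrow> expectation (\<lambda>\<omega>. U n i \<omega> * U n j \<omega>) = 0"
  shows "integrable M (\<lambda>\<omega>. ((\<Sum>i<n. U n i \<omega>) / n)\<^sup>2)"
    and "expectation (\<lambda>\<omega>. ((\<Sum>i<n. U n i \<omega>) / n)\<^sup>2) \<le> C\<^sup>2 / n"
proof -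
  have UU_bound: "\<bar>U n i \<omega> * U n j \<omega>\<bar> \<le> C\<^sup>2" if "\<omega> \<in> space M" for i j \<omega>
    using mult_mono'[OF bound[OF that, of i] bound[OF that, of j] abs_ge_zero abs_ge_zero]
    by (simp add: abs_mult power2_eq_square)
  have UU_int: "integrable M (\<lambda>\<omega>. U n i \<omega> * U n j \<omega>)" for i j
    using UU_bound by (intro integrable_const_bound[where B = "C\<^sup>2"]) auto
  have square: "((\<Sum>i<n. U n i \<omega>) / n)\<^sup>2 = (\<Sum>i<n. \<Sum>j<n. U n i \<omega> * U n j \<omega>) / n\<^sup>2" for \<omega>
    by (simp add: power2_eq_square sum_product power_divide)
  show "integrable M (\<lambda>\<omega>. ((\<Sum>i<n. U n i \<omega>) / n)\<^sup>2)"
    unfolding square using UU_int by auto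
  have "expectation (\<lambda>\<omega>. ((\<Sum>i<n. U n i \<omega>) / n)\<^sup>2)
      = (\<Sum>i<n. \<Sum>j<n. expectation (\<lambda>\<omega>. U n i \<omega> * U n j \<omega>)) / n\<^sup>2"
    unfolding square using UU_int by (simp add: integral_sum integrable_sum)
  also have "\<dots> = (\<Sum>i<n. expectation (\<lambda>\<omega>. U n i \<omega> * U n i \<omega>)) / n\<^sup>2"
  proof (rule arg_cong[where f = "\<lambda>x. x / real (n\<^sup>2)"], rule sum.cong[OF refl])
    fix i assume "i \<in> {..<n}"
    with orth show "(\<Sum>j<n. expectation (\<lambda>\<omega>. U n i \<omega> * U n j \<omega>)) = expectation (\<lambda>\<omega>. U n i \<omega> * U n i \<omega>)"
      by (subst sum.remove[of _ i]) (auto intro!: sum.neutral)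
  qed
  also have "\<dots> \<le> (\<Sum>i<n. C\<^sup>2) / n\<^sup>2"
  proof (intro divide_right_mono sum_mono)
    fix i
    have "expectation (\<lambda>\<omega>. U n i \<omega> * U n i \<omega>) \<le> expectation (\<lambda>\<omega>. C\<^sup>2)"
      using UU_bound by (intro integral_mono[OF UU_int]) (auto simp: abs_le_iff)
    then show "expectation (\<lambda>\<omega>. U n i \<omega> * U n i \<omega>) \<le> C\<^sup>2"
      by (simp add: prob_space)
  qed simp
  also have "\<dots> = C\<^sup>2 / n"
    by (simp add: power2_eq_square)
  finally show "expectation (\<lambda>\<omega>. ((\<Sum>i<n. U n i \<omega>) / n)\<^sup>2) \<le> C\<^sup>2 / n" .
qed

lemma (in prob_space) conv_in_prob_avg_orthogonal:
  fixes U :: "nat \<Rightarrow> nat \<Rightarrow> 'a \<Rightarrow> real"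
  assumes [measurable]: "\<And>n i. U n i \<in> borel_measurable M"
    and bound: "\<And>n i \<omega>. \<omega> \<in> space M \<Longrightarrow> \<bar>U n i \<omega>\<bar> \<le> C"
    and orth: "\<And>n i j. i < n \<Longrightarrow> j < n \<Longrightarrow> i \<noteq> j \<Longrightarrow> expectation (\<lambda>\<omega>. U n i \<omega> * U n j \<omega>) = 0"
  shows "conv_in_prob M (\<lambda>n \<omega>. (\<Sum>i<n. U n i \<omega>) / n) 0"
proof (rule conv_in_prob_zero_if_second_moment)
  show "integrable M (\<lambda>\<omega>. ((\<Sum>i<n. U n i \<omega>) / n)\<^sup>2)" for n
    by (rule integral_square_avg_orthogonal[OF _ bound orth]) simp
  show "(\<lambda>n. expectation (\<lambda>\<omega>. ((\<Sum>i<n. U n i \<omega>) / n)\<^sup>2)) \<longlonglongrightarrow> 0"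
  proof (rule tendsto_sandwich[OF _ _ tendsto_const lim_const_over_n[of "C\<^sup>2"]])
    show "\<forall>\<^sub>F n in sequentially. expectation (\<lambda>\<omega>. ((\<Sum>i<n. U n i \<omega>) / n)\<^sup>2) \<le> C\<^sup>2 / n"
      by (intro always_eventually allI integral_square_avg_orthogonal[OF _ bound orth]) simp
  qed simp
qed simp

section \<open>Matrices\<close>

lemma outer_nth [simp]: "outer x y $ i $ j = x $ i * y $ j"
  by (simp add: outer_def)

lemma bounded_bilinear_outer: "bounded_bilinear outer"
  unfolding bilinear_conv_bounded_bilinear[symmetric] bilinear_def
  by (auto intro!: linearI simp: vec_eq_iff algebra_simps)

lemmas tendsto_outer [tendsto_intros] = bounded_bilinear.tendsto[OF bounded_bilinear_outer]

lemmas continuous_outer [continuous_intros] = bounded_bilinear.continuous[OF bounded_bilinear_outer]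

lemma borel_measurable_outer [measurable (raw)]:
  assumes "f \<in> borel_measurable M" "g \<in> borel_measurable M"
  shows "(\<lambda>x. outer (f x) (g x)) \<in> borel_measurable M"
proof -
  have "(\<lambda>p. outer (fst p) (snd p)) \<in> borel_measurable (borel :: ((real^'n) \<times> (real^'n)) measure)"
    by (intro borel_measurable_continuous_onI continuous_at_imp_continuous_on ballI continuous_intros)
  from measurable_compose[OF _ this, of "\<lambda>x. (f x, g x)"] assms show ?thesis by simp
qed

lemma norm_outer: "norm (outer x y) = norm x * norm y"
proof -
  have "outer x y $ i = x $ i *\<^sub>R y" for i by (simp add: vec_eq_iff)
  then have "norm (outer x y) = L2_set (\<lambda>i. norm y * \<bar>x $ i\<bar>) UNIV"
    by (simp add: norm_vec_def[of "outer x y"] mult.commute)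
  also have "\<dots> = norm y * norm x"
    by (simp add: norm_vec_def[of x] L2_set_right_distrib)
  finally show ?thesis by simp
qed

definition replace_column :: "'a^'n^'m \<Rightarrow> 'n \<Rightarrow> 'a^'m \<Rightarrow> 'a^'n^'m" where
  "replace_column A k b = (\<chi> i j. if j = k then b $ i else A $ i $ j)"

lemma tendsto_det [tendsto_intros]:
  fixes f :: "'a \<Rightarrow> real^'n^'n"
  shows "(f \<longlongrightarrow> A) F \<Longrightarrow> ((\<lambda>x. det (f x)) \<longlongrightarrow> det A) F"
  unfolding det_def by (intro tendsto_intros)

lemma continuous_det [continuous_intros]:
  fixes f :: "'a::t2_space \<Rightarrow> real^'n^'n"
  shows "continuous F f \<Longrightarrow> continuous F (\<lambda>x. det (f x))"
  unfolding continuous_def by (rule tendsto_det)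

lemma tendsto_replace_column [tendsto_intros]:
  assumes "(f \<longlongrightarrow> A) F" "(g \<longlongrightarrow> b) F"
  shows "((\<lambda>x. replace_column (f x) k (g x)) \<longlongrightarrow> replace_column A k b) F"
  unfolding replace_column_def
proof (intro tendsto_vec_lambda)
  fix i j
  show "((\<lambda>x. if j = k then g x $ i else f x $ i $ j) \<longlongrightarrow> (if j = k then b $ i else A $ i $ j)) F"
    by (cases "j = k") (auto intro!: tendsto_intros assms)
qed

lemma continuous_replace_column [continuous_intros]:
  "continuous F f \<Longrightarrow> continuous F g \<Longrightarrow> continuous F (\<lambda>x. replace_column (f x) k (g x))"
  unfolding continuous_def by (rule tendsto_replace_column)

lemma matrix_inv_right: "invertible A \<Longrightarrow> A ** matrix_inv A = mat 1"
  unfolding invertible_def matrix_inv_def by (rule someI_ex[THEN conjunct1])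

lemma inv0_mult_vec_cramer: "inv0 A *v b = (\<chi> k. det (replace_column A k b) / det A)"
proof (cases "invertible A")
  case False
  then show ?thesis by (simp add: inv0_def vec_eq_iff invertible_det_nz)
next
  case True
  then have "A *v (matrix_inv A *v b) = b"
    by (simp add: matrix_vector_mul_assoc matrix_inv_right)
  with cramer[of A "matrix_inv A *v b" b] True show ?thesis
    by (simp add: inv0_def replace_column_def invertible_det_nz)
qed

lemma tendsto_inv0_mult_vec:
  fixes f :: "'a \<Rightarrow> real^'n^'n"
  assumes "(f \<longlongrightarrow> A) F" "(g \<longlongrightarrow> b) F" "det A \<noteq> 0"
  shows "((\<lambda>x. inv0 (f x) *v g x) \<longlongrightarrow> inv0 A *v b) F"
  unfolding inv0_mult_vec_cramer using assms by (intro tendsto_intros) auto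

lemma borel_measurable_vec_lambda:
  fixes f :: "'a \<Rightarrow> 'i::finite \<Rightarrow> 'b::euclidean_space"
  assumes "\<And>i. (\<lambda>x. f x i) \<in> borel_measurable M"
  shows "(\<lambda>x. \<chi> i. f x i) \<in> borel_measurable M"
  using assms by (auto simp: borel_measurable_euclidean_space[where 'c = "'b^'i"] Basis_vec_def inner_axis)

lemma borel_measurable_vec_nth [measurable (raw)]:
  fixes f :: "'a \<Rightarrow> 'b::euclidean_space^'n"
  assumes "f \<in> borel_measurable M"
  shows "(\<lambda>x. f x $ i) \<in> borel_measurable M"
proof -
  have "(\<lambda>x::'b^'n. x $ i) \<in> borel_measurable borel"
    by (intro borel_measurable_continuous_onI continuous_on_component continuous_on_id)
  from measurable_compose[OF assms this] show ?thesis .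
qed

lemma borel_measurable_inv0_mult_vec [measurable (raw)]:
  fixes f :: "'a \<Rightarrow> real^'n^'n"
  assumes [measurable]: "f \<in> borel_measurable M" "g \<in> borel_measurable M"
  shows "(\<lambda>x. inv0 (f x) *v g x) \<in> borel_measurable M"
proof -
  have num: "(\<lambda>p. det (replace_column (fst p) k (snd p)))
      \<in> borel_measurable (borel :: ((real^'n^'n) \<times> (real^'n)) measure)" for k
    by (rule borel_measurable_continuous_onI, rule continuous_at_imp_continuous_on,
        intro ballI continuous_intros)
  have den: "(\<lambda>p. det (fst p)) \<in> borel_measurable (borel :: ((real^'n^'n) \<times> (real^'n)) measure)"
    by (rule borel_measurable_continuous_onI, rule continuous_at_imp_continuous_on,
        intro ballI continuous_intros)
  have [measurable]: "(\<lambda>x. det (replace_column (f x) k (g x))) \<in> borel_measurable M" for k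
    using measurable_compose[OF _ num, of "\<lambda>x. (f x, g x)"] by simp
  have [measurable]: "(\<lambda>x. det (f x)) \<in> borel_measurable M"
    using measurable_compose[OF _ den, of "\<lambda>x. (f x, g x)"] by simp
  show ?thesis
    unfolding inv0_mult_vec_cramer by (intro borel_measurable_vec_lambda) measurable
qed

lemma det_scaleR: "det (r *\<^sub>R A) = r ^ CARD('n) * det (A :: real^'n^'n)"
proof -
  have "r *\<^sub>R A = (\<chi> i. r *s A $ i)" by (simp add: vec_eq_iff)
  then show ?thesis by (simp add: det_rows_mul)
qed

lemma inv0_scaleR_mult_vec:
  fixes A :: "real^'n^'n"
  assumes "r \<noteq> 0"
  shows "inv0 (r *\<^sub>R A) *v (r *\<^sub>R b) = inv0 A *v b"
proof -
  have "replace_column (r *\<^sub>R A) k (r *\<^sub>R b) = r *\<^sub>R replace_column A k b" for k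
    by (simp add: replace_column_def vec_eq_iff)
  with assms show ?thesis by (simp add: inv0_mult_vec_cramer det_scaleR)
qed

lemma posdef_det_nonzero:
  fixes A :: "real^'n^'n"
  assumes "posdef A"
  shows "det A \<noteq> 0"
proof
  assume "det A = 0"
  then obtain v where "v \<noteq> 0" "A *v v = 0"
    using det_nz_iff_inj[OF matrix_vector_mul_linear[of A]] linear_injective_0[OF matrix_vector_mul_linear[of A]]
    by (auto simp: matrix_of_matrix_vector_mul)
  with assms show False unfolding posdef_def by (metis inner_zero_right less_irrefl)
qed

lemma (in finite_measure) conv_in_prob_inv0_mult_vec:
  fixes A :: "nat \<Rightarrow> 'a \<Rightarrow> real^'n^'n"
  assumes A: "conv_in_prob M A A0" and b: "conv_in_prob M b b0" and "det A0 \<noteq> 0"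
  shows "conv_in_prob M (\<lambda>n \<omega>. inv0 (A n \<omega>) *v b n \<omega>) (inv0 A0 *v b0)"
proof -
  have [measurable]: "A n \<in> borel_measurable M" "b n \<in> borel_measurable M" for n
    using conv_in_prob_measurable[OF A] conv_in_prob_measurable[OF b] by auto
  have "conv_in_prob M (\<lambda>n \<omega>. (\<lambda>q. inv0 (fst q) *v snd q) (A n \<omega>, b n \<omega>)) ((\<lambda>q. inv0 (fst q) *v snd q) (A0, b0))"
  proof (rule conv_in_prob_continuous_map[OF conv_in_prob_Pair[OF A b]])
    show "isCont (\<lambda>q. inv0 (fst q) *v snd q) (A0, b0)"
      unfolding isCont_def using \<open>det A0 \<noteq> 0\<close> by (intro tendsto_inv0_mult_vec tendsto_intros) auto
    show "(\<lambda>\<omega>. (\<lambda>q. inv0 (fst q) *v snd q) (A n \<omega>, b n \<omega>)) \<in> borel_measurable M" for n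
      by simp
  qed
  then show ?thesis
    by simp
qed

lemma Sxx_eq:
  "Sxx X S = (\<Sum>i\<in>S. outer (X i) (X i)) - (1 / real (card S)) *\<^sub>R outer (\<Sum>i\<in>S. X i) (\<Sum>i\<in>S. X i)"
proof -
  interpret outer: bounded_bilinear outer
    by (rule bounded_bilinear_outer)
  define c where "c = real (card S)"
  define s where "s = (\<Sum>i\<in>S. X i)"
  have "Sxx X S = (\<Sum>i\<in>S. outer (X i) (X i)) - outer s ((1 / c) *\<^sub>R s) - outer ((1 / c) *\<^sub>R s) s
      + c *\<^sub>R outer ((1 / c) *\<^sub>R s) ((1 / c) *\<^sub>R s)"
    by (simp add: Sxx_def xbar_def outer.diff_left outer.diff_right sum.distrib sum_subtractf
        outer.sum_left outer.sum_right sum_constant_scaleR c_def s_def del: sum_constant)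
  also have "\<dots> = (\<Sum>i\<in>S. outer (X i) (X i)) - (1 / c) *\<^sub>R outer s s"
    by (cases "c = 0") (simp_all add: outer.scaleR_left outer.scaleR_right outer.zero_left outer.zero_right algebra_simps)
  finally show ?thesis
    by (simp add: c_def s_def)
qed

lemma Sxy_eq:
  "Sxy X Y S = (\<Sum>i\<in>S. Y i *\<^sub>R X i) - ((\<Sum>i\<in>S. Y i) / real (card S)) *\<^sub>R (\<Sum>i\<in>S. X i)"
  by (simp add: Sxy_def xbar_def scaleR_diff_right sum_subtractf scaleR_sum_left[symmetric] sum_divide_distrib[symmetric])

section \<open>Integrals and conditional means\<close>

lemma (in prob_space) tendsto_integral_excess:
  fixes g :: "'a \<Rightarrow> real"
  assumes "integrable M g"
  shows "(\<lambda>m. expectation (\<lambda>\<omega>. max (\<bar>g \<omega>\<bar> - real m) 0)) \<longlonglongrightarrow> 0"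
proof -
  have [measurable]: "g \<in> borel_measurable M"
    using assms by simp
  have "(\<lambda>m. expectation (\<lambda>\<omega>. max (\<bar>g \<omega>\<bar> - real m) 0)) \<longlonglongrightarrow> expectation (\<lambda>\<omega>. 0)"
  proof (rule integral_dominated_convergence[where w = "\<lambda>\<omega>. \<bar>g \<omega>\<bar>"])
    show "AE \<omega> in M. (\<lambda>m. max (\<bar>g \<omega>\<bar> - real m) 0) \<longlonglongrightarrow> 0"
    proof (rule AE_I2)
      fix \<omega>
      obtain N :: nat where "\<bar>g \<omega>\<bar> \<le> real N"
        using real_arch_simple by blast
      then have "eventually (\<lambda>m. max (\<bar>g \<omega>\<bar> - real m) 0 = 0) sequentially"
        unfolding eventually_sequentially by (intro exI[of _ N]) auto
      then show "(\<lambda>m. max (\<bar>g \<omega>\<bar> - real m) 0) \<longlonglongrightarrow> 0"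
        by (rule tendsto_eventually)
    qed
  qed (use assms in auto)
  then show ?thesis by simp
qed

lemma (in prob_space) recentred_approx:
  fixes f u :: "'a \<Rightarrow> real"
  assumes f: "integrable M f" and [measurable]: "u \<in> borel_measurable M" and u_bound: "\<And>x. \<bar>u x\<bar> \<le> C"
    and S: "S \<in> sets M" "prob S > 0" and off: "\<And>x. x \<in> space M - S \<Longrightarrow> u x = 0"
    and mean0: "expectation f = 0" and close: "expectation (\<lambda>x. \<bar>f x - u x\<bar>) \<le> \<delta>"
  obtains k C' where "k \<in> borel_measurable M" "\<And>x. \<bar>k x\<bar> \<le> C'" "\<And>x. x \<in> space M - S \<Longrightarrow> k x = 0"
    "expectation k = 0" "expectation (\<lambda>x. \<bar>f x - k x\<bar>) \<le> 2 * \<delta>"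
proof -
  define \<mu> where "\<mu> = expectation u / prob S"
  define k where "k x = u x - \<mu> * indicator S x" for x
  have [measurable]: "S \<in> sets M"
    by (rule S)
  have int_u: "integrable M u"
    using u_bound by (intro integrable_const_bound[where B = C]) auto
  have int_S: "integrable M (\<lambda>x. c * indicator S x)" for c :: real
    using S by (intro integrable_mult_right integrable_real_indicator) (auto simp: emeasure_eq_measure)
  have "\<bar>\<mu>\<bar> * prob S = \<bar>expectation (\<lambda>x. u x - f x)\<bar>"
    using S(2) f int_u mean0 by (simp add: \<mu>_def abs_divide)
  also have "\<dots> \<le> expectation (\<lambda>x. \<bar>f x - u x\<bar>)"
    using integral_abs_bound[where f = "\<lambda>x. u x - f x"] by (simp add: abs_minus_commute)
  finally have "\<bar>\<mu>\<bar> * prob S \<le> \<delta>"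
    using close by linarith
  show ?thesis
  proof (rule that[of k "C + \<bar>\<mu>\<bar>"])
    show "k \<in> borel_measurable M"
      unfolding k_def by measurable
    show "\<bar>k x\<bar> \<le> C + \<bar>\<mu>\<bar>" for x
      using u_bound[of x] abs_triangle_ineq4[of "u x" \<mu>] by (cases "x \<in> S") (simp_all add: k_def)
    show "x \<in> space M - S \<Longrightarrow> k x = 0" for x
      using off[of x] by (simp add: k_def)
    have "expectation k = expectation u - \<mu> * prob S"
      using int_u int_S S unfolding k_def[abs_def] by (simp add: emeasure_eq_measure)
    then show "expectation k = 0"
      using S(2) by (simp add: \<mu>_def)
    have "expectation (\<lambda>x. \<bar>f x - k x\<bar>) = expectation (\<lambda>x. \<bar>(f x - u x) + \<mu> * indicator S x\<bar>)"
      by (simp add: k_def algebra_simps)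
    also have "\<dots> \<le> expectation (\<lambda>x. \<bar>f x - u x\<bar> + \<bar>\<mu>\<bar> * indicator S x)"
      using f int_u int_S
      by (intro integral_mono integrable_abs Bochner_Integration.integrable_add Bochner_Integration.integrable_diff)
        (auto simp: indicator_def)
    also have "\<dots> = expectation (\<lambda>x. \<bar>f x - u x\<bar>) + \<bar>\<mu>\<bar> * prob S"
      using f int_u int_S S by (simp add: emeasure_eq_measure)
    finally show "expectation (\<lambda>x. \<bar>f x - k x\<bar>) \<le> 2 * \<delta>"
      using close \<open>\<bar>\<mu>\<bar> * prob S \<le> \<delta>\<close> by simp
  qed
qed

lemma (in prob_space) bounded_mean_zero_approx:
  fixes f :: "'a \<Rightarrow> real"
  assumes f: "integrable M f" and S: "S \<in> sets M" "prob S > 0"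
    and off: "\<And>x. x \<in> space M - S \<Longrightarrow> f x = 0" and mean0: "expectation f = 0" and "\<delta> > 0"
  obtains k C where "k \<in> borel_measurable M" "\<And>x. \<bar>k x\<bar> \<le> C" "\<And>x. x \<in> space M - S \<Longrightarrow> k x = 0"
    "expectation k = 0" "expectation (\<lambda>x. \<bar>f x - k x\<bar>) \<le> \<delta>"
proof -
  have [measurable]: "f \<in> borel_measurable M"
    using f by simp
  have "eventually (\<lambda>m. expectation (\<lambda>x. max (\<bar>f x\<bar> - real m) 0) < \<delta> / 2) sequentially"
    using \<open>\<delta> > 0\<close> by (intro order_tendstoD(2)[OF tendsto_integral_excess[OF f]]) simp
  then obtain c where "\<forall>m\<ge>c. expectation (\<lambda>x. max (\<bar>f x\<bar> - real m) 0) < \<delta> / 2"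
    unfolding eventually_sequentially by blast
  then have tail: "expectation (\<lambda>x. max (\<bar>f x\<bar> - real c) 0) \<le> \<delta> / 2"
    by (meson le_refl less_imp_le)
  define u where "u x = max (- real c) (min (real c) (f x))" for x
  have [measurable]: "u \<in> borel_measurable M"
    unfolding u_def by measurable
  have "\<bar>f x - u x\<bar> = max (\<bar>f x\<bar> - real c) 0" for x
    by (auto simp: u_def)
  with tail have close: "expectation (\<lambda>x. \<bar>f x - u x\<bar>) \<le> \<delta> / 2"
    by simp
  have u_bound: "\<bar>u x\<bar> \<le> real c" for x
    by (auto simp: u_def)
  have u_off: "u x = 0" if "x \<in> space M - S" for x
    using off[OF that] by (simp add: u_def)
  obtain k C where "k \<in> borel_measurable M" "\<And>x. \<bar>k x\<bar> \<le> C" "\<And>x. x \<in> space M - S \<Longrightarrow> k x = 0"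
    "expectation k = 0" "expectation (\<lambda>x. \<bar>f x - k x\<bar>) \<le> 2 * (\<delta> / 2)"
    using recentred_approx[OF f \<open>u \<in> borel_measurable M\<close> u_bound S u_off mean0 close] by blast
  then show ?thesis
    by (intro that[of k C]) auto
qed

lemma (in finite_measure) integrable_if_norm_square_integrable:
  fixes f :: "'a \<Rightarrow> 'b::{banach, second_countable_topology}"
  assumes [measurable]: "f \<in> borel_measurable M" and "integrable M (\<lambda>x. (norm (f x))\<^sup>2)"
  shows "integrable M f"
proof -
  have "integrable M (\<lambda>x. norm (f x))"
    by (rule square_integrable_imp_integrable) (use assms in auto)
  then show ?thesis
    by (simp add: integrable_norm_iff)
qed

lemma (in finite_measure) cond_mean_diff:
  assumes E: "{\<omega> \<in> space M. Z \<omega> = z} \<in> sets M" and "integrable M U" "integrable M V"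
  shows "cond_mean M (\<lambda>\<omega>. U \<omega> - V \<omega>) Z z = cond_mean M U Z z - cond_mean M V Z z"
proof -
  have "(LINT \<omega>|M. indicator {\<omega> \<in> space M. Z \<omega> = z} \<omega> *\<^sub>R (U \<omega> - V \<omega>))
      = (LINT \<omega>|M. indicator {\<omega> \<in> space M. Z \<omega> = z} \<omega> *\<^sub>R U \<omega>)
      - (LINT \<omega>|M. indicator {\<omega> \<in> space M. Z \<omega> = z} \<omega> *\<^sub>R V \<omega>)"
    using integrable_mult_indicator[OF E assms(2)] integrable_mult_indicator[OF E assms(3)]
    by (simp add: scaleR_diff_right)
  then show ?thesis by (simp add: cond_mean_def scaleR_diff_right)
qed

lemma (in finite_measure) cond_mean_bounded_linear:
  assumes T: "bounded_linear T"
    and E: "{\<omega> \<in> space M. Z \<omega> = z} \<in> sets M" and V: "integrable M V"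
  shows "cond_mean M (\<lambda>\<omega>. T (V \<omega>)) Z z = T (cond_mean M V Z z)"
proof -
  interpret T: bounded_linear T by fact
  show ?thesis
    using integral_bounded_linear[OF T integrable_mult_indicator[OF E V]]
    by (simp add: cond_mean_def T.scaleR)
qed

lemma (in finite_measure) cond_mean_const:
  assumes E: "{\<omega> \<in> space M. Z \<omega> = z} \<in> sets M" and "measure M {\<omega> \<in> space M. Z \<omega> = z} \<noteq> 0"
  shows "cond_mean M (\<lambda>\<omega>. c) Z z = c"
  using assms set_integral_const[OF E, of c] by (simp add: cond_mean_def set_lebesgue_integral_def)

lemma (in finite_measure) cond_mean_bilinear_centered:
  fixes X :: "'a \<Rightarrow> 'b::{banach, second_countable_topology}"
    and Y :: "'a \<Rightarrow> 'c::{banach, second_countable_topology}"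
    and B :: "'b \<Rightarrow> 'c \<Rightarrow> 'd::{banach, second_countable_topology}"
  assumes B: "bounded_bilinear B"
    and E: "{\<omega> \<in> space M. Z \<omega> = z} \<in> sets M" and E0: "measure M {\<omega> \<in> space M. Z \<omega> = z} \<noteq> 0"
    and X: "integrable M X" and Y: "integrable M Y" and XY: "integrable M (\<lambda>\<omega>. B (X \<omega>) (Y \<omega>))"
  defines "\<mu> \<equiv> cond_mean M X Z z" and "\<nu> \<equiv> cond_mean M Y Z z"
  shows "cond_mean M (\<lambda>\<omega>. B (X \<omega> - \<mu>) (Y \<omega> - \<nu>)) Z z = cond_mean M (\<lambda>\<omega>. B (X \<omega>) (Y \<omega>)) Z z - B \<mu> \<nu>"
proof -
  interpret B: bounded_bilinear B by fact
  have Xv: "integrable M (\<lambda>\<omega>. B (X \<omega>) \<nu>)" and uY: "integrable M (\<lambda>\<omega>. B \<mu> (Y \<omega>))"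
    using integrable_bounded_linear[OF B.bounded_linear_left X] integrable_bounded_linear[OF B.bounded_linear_right Y]
    by auto
  have "cond_mean M (\<lambda>\<omega>. B (X \<omega> - \<mu>) (Y \<omega> - \<nu>)) Z z
      = cond_mean M (\<lambda>\<omega>. (B (X \<omega>) (Y \<omega>) - B (X \<omega>) \<nu>) - (B \<mu> (Y \<omega>) - B \<mu> \<nu>)) Z z"
    by (simp add: B.diff_left B.diff_right algebra_simps)
  also have "\<dots> = (cond_mean M (\<lambda>\<omega>. B (X \<omega>) (Y \<omega>)) Z z - B \<mu> \<nu>) - (B \<mu> \<nu> - B \<mu> \<nu>)"
    using XY Xv uY E E0
    by (simp add: cond_mean_diff cond_mean_const \<mu>_def \<nu>_def X Y
        cond_mean_bounded_linear[OF B.bounded_linear_left] cond_mean_bounded_linear[OF B.bounded_linear_right])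
  finally show ?thesis by simp
qed

lemma (in finite_measure) cond_var_eq:
  assumes "{\<omega> \<in> space M. Z \<omega> = z} \<in> sets M" "measure M {\<omega> \<in> space M. Z \<omega> = z} \<noteq> 0"
    and "integrable M X" "integrable M (\<lambda>\<omega>. outer (X \<omega>) (X \<omega>))"
  shows "cond_var M X Z z
    = cond_mean M (\<lambda>\<omega>. outer (X \<omega>) (X \<omega>)) Z z - outer (cond_mean M X Z z) (cond_mean M X Z z)"
  unfolding cond_var_def using assms(1-3,3,4) by (rule cond_mean_bilinear_centered[OF bounded_bilinear_outer])

lemma (in finite_measure) cond_cov_eq:
  assumes "{\<omega> \<in> space M. Z \<omega> = z} \<in> sets M" "measure M {\<omega> \<in> space M. Z \<omega> = z} \<noteq> 0"
    and "integrable M X" "integrable M Y" "integrable M (\<lambda>\<omega>. Y \<omega> *\<^sub>R X \<omega>)"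
  shows "cond_cov M X Y Z z = cond_mean M (\<lambda>\<omega>. Y \<omega> *\<^sub>R X \<omega>) Z z - cond_mean M Y Z z *\<^sub>R cond_mean M X Z z"
  unfolding cond_cov_def using assms(1,2,4,3,5) by (rule cond_mean_bilinear_centered[OF bounded_bilinear_scaleR])

lemma posdef_cond_var_imp_measure_nonzero:
  assumes "posdef (cond_var M X Z z)"
  shows "measure M {\<omega> \<in> space M. Z \<omega> = z} \<noteq> 0"
proof
  assume "measure M {\<omega> \<in> space M. Z \<omega> = z} = 0"
  then have "cond_var M X Z z = 0"
    by (simp add: cond_var_def cond_mean_def)
  moreover have "axis undefined 1 \<noteq> (0 :: real^'p)"
    by (simp add: axis_eq_0_iff)
  ultimately show False
    using assms unfolding posdef_def by (metis inner_zero_right less_irrefl matrix_vector_mult_0)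
qed

lemma emeasure_density_const_indicator:
  assumes "0 \<le> c" "E \<in> sets M" "S \<in> sets M"
  shows "emeasure (density M (\<lambda>x. ennreal (c * indicator E x))) S = ennreal c * emeasure M (E \<inter> S)"
proof -
  have "emeasure (density M (\<lambda>x. ennreal (c * indicator E x))) S
      = (\<integral>\<^sup>+ x. ennreal c * indicator (E \<inter> S) x \<partial>M)"
    using assms by (subst emeasure_density) (auto intro!: nn_integral_cong simp: indicator_def)
  also have "\<dots> = ennreal c * emeasure M (E \<inter> S)"
    using assms by (intro nn_integral_cmult_indicator) auto
  finally show ?thesis .
qed

lemma (in prob_space) cond_indep_disc_integral:
  fixes F :: "'c \<Rightarrow> real"
  assumes ci: "cond_indep_disc M X MX Y MY Z"
    and [measurable]: "X \<in> measurable M MX" "Y \<in> measurable M MY" "{\<omega> \<in> space M. Z \<omega> = z} \<in> sets M"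
      "A \<in> sets MX" "F \<in> borel_measurable MY"
  defines "E \<equiv> {\<omega> \<in> space M. Z \<omega> = z}" and "EA \<equiv> {\<omega> \<in> space M. X \<omega> \<in> A \<and> Z \<omega> = z}"
  shows "(\<integral>\<omega>. indicator EA \<omega> * F (Y \<omega>) \<partial>M) * prob E = prob EA * (\<integral>\<omega>. indicator E \<omega> * F (Y \<omega>) \<partial>M)"
proof -
  have [measurable]: "E \<in> sets M" "EA \<in> sets M"
    unfolding E_def EA_def by measurable
  define g1 where "g1 \<omega> = prob E * indicator EA \<omega>" for \<omega>
  define g2 where "g2 \<omega> = prob EA * indicator E \<omega>" for \<omega>
  have [measurable]: "g1 \<in> borel_measurable M" "g2 \<in> borel_measurable M"
    unfolding g1_def g2_def by measurable
  have "distr (density M g1) MY Y = distr (density M g2) MY Y"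
  proof (rule measure_eqI)
    fix S assume "S \<in> sets (distr (density M g1) MY Y)"
    then have [measurable]: "S \<in> sets MY" by simp
    have key: "prob E * prob {\<omega> \<in> space M. X \<omega> \<in> A \<and> Y \<omega> \<in> S \<and> Z \<omega> = z}
        = prob EA * prob {\<omega> \<in> space M. Y \<omega> \<in> S \<and> Z \<omega> = z}"
      using ci \<open>A \<in> sets MX\<close> \<open>S \<in> sets MY\<close> unfolding cond_indep_disc_def E_def EA_def
      by (simp add: mult.commute)
    have "EA \<inter> (Y -` S \<inter> space M) = {\<omega> \<in> space M. X \<omega> \<in> A \<and> Y \<omega> \<in> S \<and> Z \<omega> = z}"
      "E \<inter> (Y -` S \<inter> space M) = {\<omega> \<in> space M. Y \<omega> \<in> S \<and> Z \<omega> = z}"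
      by (auto simp: E_def EA_def)
    moreover have "emeasure (distr (density M g1) MY Y) S = ennreal (prob E) * emeasure M (EA \<inter> (Y -` S \<inter> space M))"
      "emeasure (distr (density M g2) MY Y) S = ennreal (prob EA) * emeasure M (E \<inter> (Y -` S \<inter> space M))"
      unfolding g1_def g2_def by (simp_all add: emeasure_distr emeasure_density_const_indicator)
    ultimately show "emeasure (distr (density M g1) MY Y) S = emeasure (distr (density M g2) MY Y) S"
      using key by (simp add: emeasure_eq_measure ennreal_mult'[symmetric])
  qed simp
  then have "integral\<^sup>L (distr (density M g1) MY Y) F = integral\<^sup>L (distr (density M g2) MY Y) F"
    by simp
  then have "(\<integral>\<omega>. g1 \<omega> * F (Y \<omega>) \<partial>M) = (\<integral>\<omega>. g2 \<omega> * F (Y \<omega>) \<partial>M)"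
    by (simp add: integral_distr integral_density g1_def g2_def)
  then have "prob E * (\<integral>\<omega>. indicator EA \<omega> * F (Y \<omega>) \<partial>M) = prob EA * (\<integral>\<omega>. indicator E \<omega> * F (Y \<omega>) \<partial>M)"
    by (simp add: g1_def g2_def mult.assoc)
  then show ?thesis
    by (simp add: mult.commute)
qed

lemma (in prob_space) cond_indep_disc_integral_eq_0:
  fixes F :: "'c \<Rightarrow> real"
  assumes ci: "cond_indep_disc M X MX Y MY Z"
    and [measurable]: "X \<in> measurable M MX" "Y \<in> measurable M MY" "{\<omega> \<in> space M. Z \<omega> = z} \<in> sets M"
      "A \<in> sets MX" "F \<in> borel_measurable MY"
    and zero: "(\<integral>\<omega>. indicator {\<omega> \<in> space M. Z \<omega> = z} \<omega> * F (Y \<omega>) \<partial>M) = 0"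
  shows "(\<integral>\<omega>. indicator {\<omega> \<in> space M. X \<omega> \<in> A \<and> Z \<omega> = z} \<omega> * F (Y \<omega>) \<partial>M) = 0"
proof (cases "prob {\<omega> \<in> space M. Z \<omega> = z} = 0")
  case True
  then have "AE \<omega> in M. \<omega> \<notin> {\<omega> \<in> space M. Z \<omega> = z}"
    by (intro AE_not_in) (simp add: null_sets_def emeasure_eq_measure)
  then have "AE \<omega> in M. indicator {\<omega> \<in> space M. X \<omega> \<in> A \<and> Z \<omega> = z} \<omega> * F (Y \<omega>) = 0"
    by eventually_elim auto
  then show ?thesis
    by (subst integral_cong_AE[where g = "\<lambda>_. 0"]) auto
next
  case False
  with cond_indep_disc_integral[OF assms(1-6)] zero show ?thesis
    by simp
qed

lemma real_card_lessThan_filter: "real (card {i. i < (n::nat) \<and> P i}) = (\<Sum>i<n. if P i then 1 else 0)"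
proof -
  have "{i. i < n \<and> P i} = {i \<in> {..<n}. P i}"
    by auto
  then have "real (card {i. i < n \<and> P i}) = (\<Sum>i\<in>{i \<in> {..<n}. P i}. 1)"
    by simp
  also have "\<dots> = (\<Sum>i<n. if P i then 1 else 0)"
    by (rule sum.inter_filter) simp
  finally show ?thesis .
qed

section \<open>The stratified trial\<close>

locale stratified_trial = prob_space M
  for M :: "'a measure" +
  fixes MW :: "'w measure"
    and Y :: "nat \<Rightarrow> 'a \<Rightarrow> real^'k"
    and W :: "nat \<Rightarrow> 'a \<Rightarrow> 'w"
    and fZ :: "'w \<Rightarrow> 'z"
    and fX :: "'w \<Rightarrow> real^'p"
    and Zs :: "'z set"
    and I :: "nat \<Rightarrow> nat \<Rightarrow> 'a \<Rightarrow> 'k"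
    and \<pi> :: "'k \<Rightarrow> real"
  assumes fZ_measurable [measurable]: "fZ \<in> measurable MW (count_space UNIV)"
    and fX_measurable [measurable]: "fX \<in> borel_measurable MW"
    and finite_Zs: "finite Zs"
    and fZ_in_Zs: "\<And>w. w \<in> space MW \<Longrightarrow> fZ w \<in> Zs"
    and I_measurable: "\<And>n i. i < n \<Longrightarrow> I n i \<in> measurable M (count_space UNIV)"
    and indep: "indep_vars (\<lambda>_. borel \<Otimes>\<^sub>M MW) (\<lambda>i \<omega>. (Y i \<omega>, W i \<omega>)) UNIV"
    and ident_distr: "\<And>i. distr M (borel \<Otimes>\<^sub>M MW) (\<lambda>\<omega>. (Y i \<omega>, W i \<omega>))
                       = distr M (borel \<Otimes>\<^sub>M MW) (\<lambda>\<omega>. (Y 0 \<omega>, W 0 \<omega>))"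
    and cond_indep: "\<And>n. cond_indep_disc M
               (\<lambda>\<omega>. restrict (\<lambda>i. I n i \<omega>) {..<n}) (PiM {..<n} (\<lambda>_. count_space UNIV))
               (\<lambda>\<omega>. restrict (\<lambda>i. (Y i \<omega>, W i \<omega>)) {..<n}) (PiM {..<n} (\<lambda>_. borel \<Otimes>\<^sub>M MW))
               (\<lambda>\<omega>. restrict (\<lambda>i. fZ (W i \<omega>)) {..<n})"
    and balanced: "\<And>z t. z \<in> Zs \<Longrightarrow> conv_in_prob M
               (\<lambda>n \<omega>. (real (card (samp (\<lambda>i. I n i \<omega>) (\<lambda>i. fZ (W i \<omega>)) n t z))
                          - \<pi> t * real (card {i. i < n \<and> fZ (W i \<omega>) = z}))
                       / real (card {i. i < n \<and> fZ (W i \<omega>) = z}))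
               0"
begin

abbreviation V :: "nat \<Rightarrow> 'a \<Rightarrow> (real^'k) \<times> 'w" where
  "V i \<omega> \<equiv> (Y i \<omega>, W i \<omega>)"

lemma V_measurable [measurable]: "(\<lambda>\<omega>. V i \<omega>) \<in> measurable M (borel \<Otimes>\<^sub>M MW)"
  using indep by (auto simp: indep_vars_def)

lemma W_measurable [measurable]: "W i \<in> measurable M MW"
  using measurable_snd'[OF V_measurable] by simp

lemma Y_measurable [measurable]: "Y i \<in> borel_measurable M"
  using measurable_fst'[OF V_measurable] by simp

lemma fZ_W_in_Zs: "\<omega> \<in> space M \<Longrightarrow> fZ (W i \<omega>) \<in> Zs"
  using measurable_space[OF W_measurable] fZ_in_Zs by blast

lemma integral_V_eq:
  fixes g :: "(real^'k) \<times> 'w \<Rightarrow> 'b::{banach, second_countable_topology}"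
  assumes [measurable]: "g \<in> borel_measurable (borel \<Otimes>\<^sub>M MW)"
  shows "expectation (\<lambda>\<omega>. g (V i \<omega>)) = expectation (\<lambda>\<omega>. g (V 0 \<omega>))"
  using integral_distr[of "\<lambda>\<omega>. V i \<omega>" M "borel \<Otimes>\<^sub>M MW" g]
    integral_distr[of "\<lambda>\<omega>. V 0 \<omega>" M "borel \<Otimes>\<^sub>M MW" g] ident_distr[of i]
  by simp

lemma integrable_V_iff:
  fixes g :: "(real^'k) \<times> 'w \<Rightarrow> 'b::{banach, second_countable_topology}"
  assumes [measurable]: "g \<in> borel_measurable (borel \<Otimes>\<^sub>M MW)"
  shows "integrable M (\<lambda>\<omega>. g (V i \<omega>)) \<longleftrightarrow> integrable M (\<lambda>\<omega>. g (V 0 \<omega>))"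
  using integrable_distr_eq[of "\<lambda>\<omega>. V i \<omega>" M "borel \<Otimes>\<^sub>M MW" g]
    integrable_distr_eq[of "\<lambda>\<omega>. V 0 \<omega>" M "borel \<Otimes>\<^sub>M MW" g] ident_distr[of i]
  by simp

lemma integral_prod_V:
  fixes \<phi> :: "nat \<Rightarrow> (real^'k) \<times> 'w \<Rightarrow> real"
  assumes "finite J"
    and [measurable]: "\<And>l. \<phi> l \<in> borel_measurable (borel \<Otimes>\<^sub>M MW)"
    and bound: "\<And>l v. v \<in> space (borel \<Otimes>\<^sub>M MW) \<Longrightarrow> \<bar>\<phi> l v\<bar> \<le> C"
  shows "expectation (\<lambda>\<omega>. \<Prod>l\<in>J. \<phi> l (V l \<omega>)) = (\<Prod>l\<in>J. expectation (\<lambda>\<omega>. \<phi> l (V l \<omega>)))"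
proof (rule indep_vars_lebesgue_integral[OF \<open>finite J\<close>])
  show "indep_vars (\<lambda>_. borel) (\<lambda>l \<omega>. \<phi> l (V l \<omega>)) J"
    using indep_vars_compose2[OF indep, of \<phi> "\<lambda>_. borel"] by (rule indep_vars_subset) auto
  show "integrable M (\<lambda>\<omega>. \<phi> l (V l \<omega>))" for l
    using bound measurable_space[OF V_measurable] by (intro integrable_const_bound[where B = C]) auto
qed

definition stratum_prob :: "'z \<Rightarrow> real" where
  "stratum_prob z = prob {\<omega> \<in> space M. fZ (W 0 \<omega>) = z}"

lemma expectation_stratum_indicator:
  "expectation (\<lambda>\<omega>. if fZ (W i \<omega>) = z then 1 else 0) = stratum_prob z"
proof -
  have [measurable]: "{\<omega> \<in> space M. fZ (W 0 \<omega>) = z} \<in> sets M" by measurable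
  have "expectation (\<lambda>\<omega>. if fZ (W i \<omega>) = z then 1 else 0)
      = expectation (\<lambda>\<omega>. if fZ (W 0 \<omega>) = z then 1 else 0 :: real)"
    using integral_V_eq[of "\<lambda>v. if fZ (snd v) = z then 1 else 0 :: real" i] by simp
  also have "\<dots> = expectation (indicator {\<omega> \<in> space M. fZ (W 0 \<omega>) = z})"
    by (rule Bochner_Integration.integral_cong) (auto simp: indicator_def)
  finally show ?thesis by (simp add: stratum_prob_def)
qed

lemma stratum_indicators_orthogonal:
  assumes "i \<noteq> j"
  shows "expectation (\<lambda>\<omega>. ((if fZ (W i \<omega>) = z then 1 else 0) - stratum_prob z)
                           * ((if fZ (W j \<omega>) = z then 1 else 0) - stratum_prob z)) = 0"
proof -
  define \<phi> where "\<phi> l v = (if fZ (snd v) = z then 1 else 0) - stratum_prob z"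
    for l :: nat and v :: "(real^'k) \<times> 'w"
  have [measurable]: "\<phi> l \<in> borel_measurable (borel \<Otimes>\<^sub>M MW)" for l
    unfolding \<phi>_def by measurable
  have "0 \<le> stratum_prob z" "stratum_prob z \<le> 1"
    by (simp_all add: stratum_prob_def)
  then have "\<bar>\<phi> l v\<bar> \<le> 1" for l v
    by (auto simp: \<phi>_def)
  then have "expectation (\<lambda>\<omega>. \<Prod>l\<in>{i, j}. \<phi> l (V l \<omega>)) = (\<Prod>l\<in>{i, j}. expectation (\<lambda>\<omega>. \<phi> l (V l \<omega>)))"
    by (intro integral_prod_V) auto
  moreover have "expectation (\<lambda>\<omega>. \<phi> i (V i \<omega>)) = 0"
    using expectation_stratum_indicator[of i z]
    by (simp add: \<phi>_def prob_space integrable_const_bound[where B = 1])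
  ultimately show ?thesis
    using assms by (simp add: \<phi>_def)
qed

lemma stratum_pattern_iff:
  "zz \<in> extensional {..<n} \<Longrightarrow>
     restrict (\<lambda>i. fZ (W i \<omega>)) {..<n} = zz \<longleftrightarrow> (\<forall>l<n. fZ (W l \<omega>) = zz l)"
  by (auto simp: extensional_def fun_eq_iff)

lemma stratum_pattern_sets [measurable]:
  "zz \<in> extensional {..<n} \<Longrightarrow> {\<omega> \<in> space M. restrict (\<lambda>i. fZ (W i \<omega>)) {..<n} = zz} \<in> sets M"
  by (simp add: stratum_pattern_iff)

lemma integral_stratum_pattern_pair:
  fixes k :: "(real^'k) \<times> 'w \<Rightarrow> real"
  assumes [measurable]: "k \<in> borel_measurable (borel \<Otimes>\<^sub>M MW)"
    and bound: "\<And>v. v \<in> space (borel \<Otimes>\<^sub>M MW) \<Longrightarrow> \<bar>k v\<bar> \<le> C"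
    and off: "\<And>v. fZ (snd v) \<noteq> z \<Longrightarrow> k v = 0"
    and mean0: "expectation (\<lambda>\<omega>. k (V 0 \<omega>)) = 0"
    and ij: "i < n" "j < n" "i \<noteq> j"
    and zz: "zz \<in> extensional {..<n}"
  shows "expectation (\<lambda>\<omega>. indicator {\<omega> \<in> space M. restrict (\<lambda>i. fZ (W i \<omega>)) {..<n} = zz} \<omega>
                           * (k (V i \<omega>) * k (V j \<omega>))) = 0"
proof -
  define \<phi> where "\<phi> l v = (if fZ (snd v) = zz l then if l = i \<or> l = j then k v else 1 else 0)" for l v
  have [measurable]: "\<phi> l \<in> borel_measurable (borel \<Otimes>\<^sub>M MW)" for l
    unfolding \<phi>_def by measurable
  have "\<bar>\<phi> l v\<bar> \<le> max C 1" if "v \<in> space (borel \<Otimes>\<^sub>M MW)" for l v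
    using bound[OF that] by (auto simp: \<phi>_def)
  then have "expectation (\<lambda>\<omega>. \<Prod>l<n. \<phi> l (V l \<omega>)) = (\<Prod>l<n. expectation (\<lambda>\<omega>. \<phi> l (V l \<omega>)))"
    by (intro integral_prod_V) auto
  also have "\<dots> = 0"
  proof -
    have "\<phi> i v = (if zz i = z then k v else 0)" for v
      using off[of v] by (auto simp: \<phi>_def)
    moreover have "expectation (\<lambda>\<omega>. k (V i \<omega>)) = 0"
      using integral_V_eq[of k i] mean0 by simp
    ultimately have "expectation (\<lambda>\<omega>. \<phi> i (V i \<omega>)) = 0"
      by (cases "zz i = z") simp_all
    with ij show ?thesis by (intro prod_zero) auto
  qed
  also have "expectation (\<lambda>\<omega>. \<Prod>l<n. \<phi> l (V l \<omega>))
      = expectation (\<lambda>\<omega>. indicator {\<omega> \<in> space M. restrict (\<lambda>i. fZ (W i \<omega>)) {..<n} = zz} \<omega>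
                           * (k (V i \<omega>) * k (V j \<omega>)))"
  proof (rule Bochner_Integration.integral_cong[OF refl])
    fix \<omega> assume "\<omega> \<in> space M"
    have split: "{..<n} = insert i (insert j ({..<n} - {i, j}))"
      using ij by auto
    have "(\<Prod>l<n. \<phi> l (V l \<omega>)) = \<phi> i (V i \<omega>) * \<phi> j (V j \<omega>) * (\<Prod>l\<in>{..<n} - {i, j}. \<phi> l (V l \<omega>))"
      using ij by (subst split) (simp add: mult.assoc)
    moreover have "(\<Prod>l\<in>{..<n} - {i, j}. \<phi> l (V l \<omega>)) = (if \<forall>l\<in>{..<n} - {i, j}. fZ (W l \<omega>) = zz l then 1 else 0)"
      by (auto simp: \<phi>_def intro: prod.neutral prod_zero)
    ultimately show "(\<Prod>l<n. \<phi> l (V l \<omega>))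
        = indicator {\<omega> \<in> space M. restrict (\<lambda>i. fZ (W i \<omega>)) {..<n} = zz} \<omega> * (k (V i \<omega>) * k (V j \<omega>))"
      using \<open>\<omega> \<in> space M\<close> ij by (auto simp: stratum_pattern_iff[OF zz] \<phi>_def indicator_def)
  qed
  finally show ?thesis .
qed

lemma integral_treated_pair_pattern:
  fixes k :: "(real^'k) \<times> 'w \<Rightarrow> real"
  assumes k_meas [measurable]: "k \<in> borel_measurable (borel \<Otimes>\<^sub>M MW)"
    and bound: "\<And>v. v \<in> space (borel \<Otimes>\<^sub>M MW) \<Longrightarrow> \<bar>k v\<bar> \<le> C"
    and off: "\<And>v. fZ (snd v) \<noteq> z \<Longrightarrow> k v = 0"
    and mean0: "expectation (\<lambda>\<omega>. k (V 0 \<omega>)) = 0"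
    and ij: "i < n" "j < n" "i \<noteq> j"
    and zz: "zz \<in> extensional {..<n}"
  shows "expectation (\<lambda>\<omega>. indicator {\<omega> \<in> space M. restrict (\<lambda>i. fZ (W i \<omega>)) {..<n} = zz} \<omega>
    * ((if I n i \<omega> = t then k (V i \<omega>) else 0) * (if I n j \<omega> = t then k (V j \<omega>) else 0))) = 0"
proof -
  define MI where "MI = PiM {..<n} (\<lambda>_. count_space (UNIV :: 'k set))"
  define MV where "MV = PiM {..<n} (\<lambda>_. borel \<Otimes>\<^sub>M MW :: ((real^'k) \<times> 'w) measure)"
  define A where "A = {x \<in> space MI. x i = t \<and> x j = t}"
  define F where "F x = k (x i) * k (x j)" for x :: "nat \<Rightarrow> (real^'k) \<times> 'w"
  have [measurable]: "(\<lambda>x. x l) \<in> measurable MI (count_space UNIV)" "(\<lambda>x. x l) \<in> measurable MV (borel \<Otimes>\<^sub>M MW)"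
    if "l < n" for l
    using that unfolding MI_def MV_def by (auto intro!: measurable_component_singleton)
  have A_sets: "A \<in> sets MI" and F_meas: "F \<in> borel_measurable MV"
    unfolding A_def F_def using ij by measurable
  have I_meas: "(\<lambda>\<omega>. restrict (\<lambda>i. I n i \<omega>) {..<n}) \<in> measurable M MI"
    unfolding MI_def by (rule measurable_restrict) (simp add: I_measurable)
  have V_meas: "(\<lambda>\<omega>. restrict (\<lambda>i. V i \<omega>) {..<n}) \<in> measurable M MV"
    unfolding MV_def by (rule measurable_restrict) simp
  have "expectation (\<lambda>\<omega>. indicator {\<omega> \<in> space M. restrict (\<lambda>i. I n i \<omega>) {..<n} \<in> A
      \<and> restrict (\<lambda>i. fZ (W i \<omega>)) {..<n} = zz} \<omega> * F (restrict (\<lambda>i. V i \<omega>) {..<n})) = 0"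
  proof (rule cond_indep_disc_integral_eq_0[OF cond_indep[of n, folded MI_def MV_def] I_meas V_meas
        stratum_pattern_sets[OF zz] A_sets F_meas])
    show "expectation (\<lambda>\<omega>. indicator {\<omega> \<in> space M. restrict (\<lambda>i. fZ (W i \<omega>)) {..<n} = zz} \<omega>
        * F (restrict (\<lambda>i. V i \<omega>) {..<n})) = 0"
      using integral_stratum_pattern_pair[OF k_meas bound off mean0 ij zz] ij by (simp add: F_def)
  qed
  moreover have "restrict (\<lambda>i. I n i \<omega>) {..<n} \<in> A \<longleftrightarrow> I n i \<omega> = t \<and> I n j \<omega> = t" if "\<omega> \<in> space M" for \<omega>
    using ij measurable_space[OF I_meas that] by (auto simp: A_def)
  ultimately show ?thesis
    using ij by (subst (asm) Bochner_Integration.integral_cong[OF refl]) (auto simp: F_def indicator_def)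
qed

lemma treated_products_orthogonal:
  fixes k :: "(real^'k) \<times> 'w \<Rightarrow> real"
  assumes k_meas [measurable]: "k \<in> borel_measurable (borel \<Otimes>\<^sub>M MW)"
    and bound: "\<And>v. v \<in> space (borel \<Otimes>\<^sub>M MW) \<Longrightarrow> \<bar>k v\<bar> \<le> C"
    and off: "\<And>v. fZ (snd v) \<noteq> z \<Longrightarrow> k v = 0"
    and mean0: "expectation (\<lambda>\<omega>. k (V 0 \<omega>)) = 0"
    and ij: "i < n" "j < n" "i \<noteq> j"
  shows "expectation (\<lambda>\<omega>. (if I n i \<omega> = t then k (V i \<omega>) else 0) * (if I n j \<omega> = t then k (V j \<omega>) else 0)) = 0"
proof -
  define Q where "Q = PiE {..<n} (\<lambda>_. Zs)"
  define T where "T \<omega> = (if I n i \<omega> = t then k (V i \<omega>) else 0) * (if I n j \<omega> = t then k (V j \<omega>) else 0)" for \<omega>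
  have "finite Q"
    unfolding Q_def using finite_Zs by (intro finite_PiE) auto
  moreover have "zz \<in> extensional {..<n}" if "zz \<in> Q" for zz
    using that by (simp add: Q_def PiE_def)
  ultimately have Q: "finite Q" "\<And>zz. zz \<in> Q \<Longrightarrow> zz \<in> extensional {..<n}"
    by blast+
  have [measurable]: "I n i \<in> measurable M (count_space UNIV)" "I n j \<in> measurable M (count_space UNIV)"
    using ij by (simp_all add: I_measurable)
  have [measurable]: "T \<in> borel_measurable M"
    unfolding T_def by measurable
  have T_bound: "\<bar>T \<omega>\<bar> \<le> \<bar>C\<bar> * \<bar>C\<bar>" if "\<omega> \<in> space M" for \<omega>
    using bound[OF measurable_space[OF V_measurable that]] unfolding T_def abs_mult
    by (intro mult_mono) (auto intro: order_trans[OF _ abs_ge_self])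
  have "expectation T = expectation (\<lambda>\<omega>. \<Sum>zz\<in>Q. indicator {\<omega> \<in> space M. restrict (\<lambda>i. fZ (W i \<omega>)) {..<n} = zz} \<omega> * T \<omega>)"
  proof (rule Bochner_Integration.integral_cong[OF refl])
    fix \<omega> assume "\<omega> \<in> space M"
    then have "restrict (\<lambda>i. fZ (W i \<omega>)) {..<n} \<in> Q"
      using fZ_W_in_Zs by (auto simp: Q_def)
    moreover have "(\<Sum>zz\<in>Q. indicator {\<omega> \<in> space M. restrict (\<lambda>i. fZ (W i \<omega>)) {..<n} = zz} \<omega> * T \<omega>)
        = (\<Sum>zz\<in>Q. if zz = restrict (\<lambda>i. fZ (W i \<omega>)) {..<n} then T \<omega> else 0)"
      using \<open>\<omega> \<in> space M\<close> by (intro sum.cong) (auto simp: indicator_def)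
    ultimately show "T \<omega> = (\<Sum>zz\<in>Q. indicator {\<omega> \<in> space M. restrict (\<lambda>i. fZ (W i \<omega>)) {..<n} = zz} \<omega> * T \<omega>)"
      using Q(1) by (simp add: sum.delta)
  qed
  also have "\<dots> = (\<Sum>zz\<in>Q. expectation (\<lambda>\<omega>. indicator {\<omega> \<in> space M. restrict (\<lambda>i. fZ (W i \<omega>)) {..<n} = zz} \<omega> * T \<omega>))"
  proof (rule Bochner_Integration.integral_sum)
    fix zz assume "zz \<in> Q"
    note [measurable] = stratum_pattern_sets[OF Q(2)[OF this]]
    show "integrable M (\<lambda>\<omega>. indicator {\<omega> \<in> space M. restrict (\<lambda>i. fZ (W i \<omega>)) {..<n} = zz} \<omega> * T \<omega>)"
    proof (rule integrable_const_bound[where B = "\<bar>C\<bar> * \<bar>C\<bar>"])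
      show "AE \<omega> in M. norm (indicator {\<omega> \<in> space M. restrict (\<lambda>i. fZ (W i \<omega>)) {..<n} = zz} \<omega> * T \<omega>)
          \<le> \<bar>C\<bar> * \<bar>C\<bar>"
        using T_bound by (intro AE_I2) (auto simp: indicator_def)
    qed measurable
  qed
  also have "\<dots> = 0"
    using integral_treated_pair_pattern[OF k_meas bound off mean0 ij Q(2)] by (intro sum.neutral) (simp add: T_def)
  finally show ?thesis
    by (simp add: T_def[abs_def])
qed

lemma borel_measurable_treated_sum:
  fixes g :: "nat \<Rightarrow> 'a \<Rightarrow> 'b::{second_countable_topology, real_normed_vector}"
  assumes "\<And>i. g i \<in> borel_measurable M"
  shows "(\<lambda>\<omega>. \<Sum>i<n. if I n i \<omega> = t then g i \<omega> else 0) \<in> borel_measurable M"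
proof (rule borel_measurable_sum)
  fix i assume "i \<in> {..<n}"
  then have [measurable]: "I n i \<in> measurable M (count_space UNIV)"
    by (intro I_measurable) simp
  have [measurable]: "g i \<in> borel_measurable M"
    by (rule assms)
  show "(\<lambda>\<omega>. if I n i \<omega> = t then g i \<omega> else 0) \<in> borel_measurable M"
    by measurable
qed

lemma conv_in_prob_treated_avg_bounded:
  fixes k :: "(real^'k) \<times> 'w \<Rightarrow> real"
  assumes [measurable]: "k \<in> borel_measurable (borel \<Otimes>\<^sub>M MW)"
    and bound: "\<And>v. \<bar>k v\<bar> \<le> C"
    and off: "\<And>v. fZ (snd v) \<noteq> z \<Longrightarrow> k v = 0"
    and mean0: "expectation (\<lambda>\<omega>. k (V 0 \<omega>)) = 0"
  shows "conv_in_prob M (\<lambda>n \<omega>. (\<Sum>i<n. if I n i \<omega> = t then k (V i \<omega>) else 0) / n) 0"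
proof -
  define U where "U n i \<omega> = (if i < n \<and> I n i \<omega> = t then k (V i \<omega>) else 0)" for n i \<omega>
  have "U n i \<in> borel_measurable M" for n i
  proof (cases "i < n")
    case True
    then have [measurable]: "I n i \<in> measurable M (count_space UNIV)"
      by (rule I_measurable)
    show ?thesis
      using True unfolding U_def by measurable
  qed (simp add: U_def[abs_def])
  moreover have "\<bar>U n i \<omega>\<bar> \<le> C" for n i \<omega>
    using bound[of "V i \<omega>"] order_trans[OF abs_ge_zero bound] by (simp add: U_def)
  moreover have "expectation (\<lambda>\<omega>. U n i \<omega> * U n j \<omega>) = 0" if "i < n" "j < n" "i \<noteq> j" for n i j
    using treated_products_orthogonal[OF _ bound off mean0 that] that by (simp add: U_def)
  ultimately have "conv_in_prob M (\<lambda>n \<omega>. (\<Sum>i<n. U n i \<omega>) / n) 0"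
    by (rule conv_in_prob_avg_orthogonal)
  moreover have "(\<Sum>i<n. U n i \<omega>) = (\<Sum>i<n. if I n i \<omega> = t then k (V i \<omega>) else 0)" for n \<omega>
    by (intro sum.cong) (auto simp: U_def)
  ultimately show ?thesis
    by simp
qed

lemma stratum_bounded_approx:
  fixes f :: "(real^'k) \<times> 'w \<Rightarrow> real"
  assumes [measurable]: "f \<in> borel_measurable (borel \<Otimes>\<^sub>M MW)"
    and int: "integrable M (\<lambda>\<omega>. f (V 0 \<omega>))"
    and off: "\<And>v. fZ (snd v) \<noteq> z \<Longrightarrow> f v = 0"
    and mean0: "expectation (\<lambda>\<omega>. f (V 0 \<omega>)) = 0"
    and pos: "stratum_prob z > 0" and "\<delta> > 0"
  obtains k C where "k \<in> borel_measurable (borel \<Otimes>\<^sub>M MW)" "\<And>v. \<bar>k v\<bar> \<le> C"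
    "\<And>v. fZ (snd v) \<noteq> z \<Longrightarrow> k v = 0" "expectation (\<lambda>\<omega>. k (V 0 \<omega>)) = 0"
    "expectation (\<lambda>\<omega>. \<bar>f (V 0 \<omega>) - k (V 0 \<omega>)\<bar>) \<le> \<delta>"
proof -
  define N where "N = distr M (borel \<Otimes>\<^sub>M MW) (\<lambda>\<omega>. V 0 \<omega>)"
  define S where "S = {v \<in> space N. fZ (snd v) = z}"
  interpret N: prob_space N
    unfolding N_def by (rule prob_space_distr) simp
  have [simp]: "sets N = sets (borel \<Otimes>\<^sub>M MW)" "space N = space (borel \<Otimes>\<^sub>M MW)"
    by (simp_all add: N_def)
  have N_integral: "N.expectation g = expectation (\<lambda>\<omega>. g (V 0 \<omega>))"
    if "g \<in> borel_measurable (borel \<Otimes>\<^sub>M MW)" for g :: "_ \<Rightarrow> real"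
    unfolding N_def using that by (rule integral_distr[rotated]) simp
  have S_sets: "S \<in> sets N"
    unfolding S_def by simp measurable
  have S_prob: "N.prob S = stratum_prob z"
    unfolding N_def S_def stratum_prob_def
    by (subst measure_distr) (auto intro!: arg_cong[where f = "measure M"] measurable_space[OF V_measurable])
  have N_int: "integrable N f"
    unfolding N_def using int by (subst integrable_distr_eq) auto
  have N_off: "f x = 0" if "x \<in> space N - S" for x
    using that off by (auto simp: S_def)
  have N_mean0: "N.expectation f = 0"
    using mean0 N_integral[of f] by simp
  obtain k C where k: "k \<in> borel_measurable N" "\<And>x. \<bar>k x\<bar> \<le> C"
    "\<And>x. x \<in> space N - S \<Longrightarrow> k x = 0" "N.expectation k = 0" "N.expectation (\<lambda>x. \<bar>f x - k x\<bar>) \<le> \<delta>"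
    using N.bounded_mean_zero_approx[OF N_int S_sets _ _ N_mean0 \<open>\<delta> > 0\<close>] S_prob pos N_off by auto
  have [measurable]: "k \<in> borel_measurable (borel \<Otimes>\<^sub>M MW)"
    using k(1) by (simp cong: measurable_cong_sets)
  define k' where "k' v = (if fZ (snd v) = z then k v else 0)" for v
  have k'_eq: "k' (V 0 \<omega>) = k (V 0 \<omega>)" if "\<omega> \<in> space M" for \<omega>
    using k(3) measurable_space[OF V_measurable that] by (auto simp: k'_def S_def)
  show ?thesis
  proof
    show "k' \<in> borel_measurable (borel \<Otimes>\<^sub>M MW)"
      unfolding k'_def by measurable
    show "\<bar>k' v\<bar> \<le> C" for v
      using k(2)[of v] order_trans[OF abs_ge_zero k(2)] by (simp add: k'_def)
    show "fZ (snd v) \<noteq> z \<Longrightarrow> k' v = 0" for v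
      by (simp add: k'_def)
    show "expectation (\<lambda>\<omega>. k' (V 0 \<omega>)) = 0"
      using k(4) N_integral[of k] k'_eq by (simp cong: Bochner_Integration.integral_cong)
    show "expectation (\<lambda>\<omega>. \<bar>f (V 0 \<omega>) - k' (V 0 \<omega>)\<bar>) \<le> \<delta>"
      using k(5) N_integral[of "\<lambda>x. \<bar>f x - k x\<bar>"] k'_eq by (simp cong: Bochner_Integration.integral_cong)
  qed
qed

lemma integral_avg_V:
  fixes g :: "(real^'k) \<times> 'w \<Rightarrow> real"
  assumes [measurable]: "g \<in> borel_measurable (borel \<Otimes>\<^sub>M MW)" and int: "integrable M (\<lambda>\<omega>. g (V 0 \<omega>))"
  shows "integrable M (\<lambda>\<omega>. (\<Sum>i<n. g (V i \<omega>)) / n)"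
    and "expectation (\<lambda>\<omega>. (\<Sum>i<n. g (V i \<omega>)) / n) = (if n = 0 then 0 else expectation (\<lambda>\<omega>. g (V 0 \<omega>)))"
proof -
  have int_i: "integrable M (\<lambda>\<omega>. g (V i \<omega>))" for i
    using integrable_V_iff[of g i] int by simp
  then show "integrable M (\<lambda>\<omega>. (\<Sum>i<n. g (V i \<omega>)) / n)"
    by auto
  have "expectation (\<lambda>\<omega>. (\<Sum>i<n. g (V i \<omega>)) / n) = (\<Sum>i<n. expectation (\<lambda>\<omega>. g (V i \<omega>))) / n"
    using int_i by simp
  also have "\<dots> = (\<Sum>i<n. expectation (\<lambda>\<omega>. g (V 0 \<omega>))) / n"
    using integral_V_eq[of g] by (intro arg_cong[where f = "\<lambda>x. x / real n"] sum.cong) auto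
  finally show "expectation (\<lambda>\<omega>. (\<Sum>i<n. g (V i \<omega>)) / n) = (if n = 0 then 0 else expectation (\<lambda>\<omega>. g (V 0 \<omega>)))"
    by simp
qed

lemma conv_in_prob_treated_avg:
  fixes f :: "(real^'k) \<times> 'w \<Rightarrow> real"
  assumes [measurable]: "f \<in> borel_measurable (borel \<Otimes>\<^sub>M MW)"
    and int: "integrable M (\<lambda>\<omega>. f (V 0 \<omega>))"
    and off: "\<And>v. fZ (snd v) \<noteq> z \<Longrightarrow> f v = 0"
    and mean0: "expectation (\<lambda>\<omega>. f (V 0 \<omega>)) = 0"
    and pos: "stratum_prob z > 0"
  shows "conv_in_prob M (\<lambda>n \<omega>. (\<Sum>i<n. if I n i \<omega> = t then f (V i \<omega>) else 0) / n) 0"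
proof (rule conv_in_prob_zero_L1_approx)
  show "(\<lambda>\<omega>. (\<Sum>i<n. if I n i \<omega> = t then f (V i \<omega>) else 0) / n) \<in> borel_measurable M" for n
    using borel_measurable_treated_sum[of "\<lambda>i \<omega>. f (V i \<omega>)" n t] by measurable
  fix \<delta> :: real assume "\<delta> > 0"
  obtain k C where [measurable]: "k \<in> borel_measurable (borel \<Otimes>\<^sub>M MW)" and k: "\<And>v. \<bar>k v\<bar> \<le> C"
    "\<And>v. fZ (snd v) \<noteq> z \<Longrightarrow> k v = 0" "expectation (\<lambda>\<omega>. k (V 0 \<omega>)) = 0"
    "expectation (\<lambda>\<omega>. \<bar>f (V 0 \<omega>) - k (V 0 \<omega>)\<bar>) \<le> \<delta>"
    using stratum_bounded_approx[OF _ int off mean0 pos \<open>\<delta> > 0\<close>] by auto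
  have int_k: "integrable M (\<lambda>\<omega>. k (V 0 \<omega>))"
    using k(1) by (intro integrable_const_bound[where B = C]) auto
  have int_diff: "integrable M (\<lambda>\<omega>. \<bar>f (V 0 \<omega>) - k (V 0 \<omega>)\<bar>)"
    using int int_k by auto
  have diff_meas: "(\<lambda>v. \<bar>f v - k v\<bar>) \<in> borel_measurable (borel \<Otimes>\<^sub>M MW)"
    by measurable
  define B where "B n \<omega> = (\<Sum>i<n. \<bar>f (V i \<omega>) - k (V i \<omega>)\<bar>) / n" for n \<omega>
  show "\<exists>A B. conv_in_prob M A 0 \<and> (\<forall>n. integrable M (B n) \<and> expectation (B n) \<le> \<delta>)
      \<and> (\<forall>n. \<forall>\<omega>\<in>space M. \<bar>(\<Sum>i<n. if I n i \<omega> = t then f (V i \<omega>) else 0) / n - A n \<omega>\<bar> \<le> B n \<omega>)"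
  proof (intro exI conjI allI ballI)
    show "conv_in_prob M (\<lambda>n \<omega>. (\<Sum>i<n. if I n i \<omega> = t then k (V i \<omega>) else 0) / n) 0"
      using conv_in_prob_treated_avg_bounded[OF _ k(1-3)] by simp
    show "integrable M (B n)" for n
      unfolding B_def[abs_def] by (rule integral_avg_V(1)[OF diff_meas int_diff])
    show "expectation (B n) \<le> \<delta>" for n
      unfolding B_def[abs_def] integral_avg_V(2)[OF diff_meas int_diff] using k(4) \<open>\<delta> > 0\<close> by simp
    show "\<bar>(\<Sum>i<n. if I n i \<omega> = t then f (V i \<omega>) else 0) / n
        - (\<Sum>i<n. if I n i \<omega> = t then k (V i \<omega>) else 0) / n\<bar> \<le> B n \<omega>" for n \<omega>
    proof -
      have eq: "(\<Sum>i<n. if I n i \<omega> = t then f (V i \<omega>) else 0) - (\<Sum>i<n. if I n i \<omega> = t then k (V i \<omega>) else 0)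
          = (\<Sum>i<n. if I n i \<omega> = t then f (V i \<omega>) - k (V i \<omega>) else 0)"
        unfolding sum_subtractf[symmetric] by (intro sum.cong) auto
      have "\<bar>\<Sum>i<n. if I n i \<omega> = t then f (V i \<omega>) - k (V i \<omega>) else 0\<bar> \<le> (\<Sum>i<n. \<bar>f (V i \<omega>) - k (V i \<omega>)\<bar>)"
        by (rule order_trans[OF sum_abs sum_mono]) auto
      then show ?thesis
        unfolding B_def diff_divide_distrib[symmetric] eq abs_divide by (simp add: divide_right_mono)
    qed
  qed
qed

lemma conv_in_prob_stratum_frequency:
  "conv_in_prob M (\<lambda>n \<omega>. real (card {i. i < n \<and> fZ (W i \<omega>) = z}) / n) (stratum_prob z)"
proof -
  define p where "p = stratum_prob z"
  define U where "U n i \<omega> = (if fZ (W i \<omega>) = z then 1 else 0) - p" for n :: nat and i \<omega>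
  have "0 \<le> p" "p \<le> 1"
    by (simp_all add: p_def stratum_prob_def)
  then have "conv_in_prob M (\<lambda>n \<omega>. (\<Sum>i<n. U n i \<omega>) / n) 0"
    using stratum_indicators_orthogonal[of _ _ z]
    by (intro conv_in_prob_avg_orthogonal[where C = 1]) (auto simp: U_def p_def)
  then have "conv_in_prob M (\<lambda>n \<omega>. (\<Sum>i<n. U n i \<omega>) / n + p) p"
    using conv_in_prob_add[OF _ conv_in_prob_const] by fastforce
  then show ?thesis
    unfolding p_def[symmetric]
  proof (rule conv_in_prob_eventually_cong)
    show "(\<lambda>\<omega>. real (card {i. i < n \<and> fZ (W i \<omega>) = z}) / n) \<in> borel_measurable M" for n
      unfolding real_card_lessThan_filter by measurable
    show "\<forall>\<^sub>F n in sequentially. \<forall>\<omega>\<in>space M.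
        (\<Sum>i<n. U n i \<omega>) / n + p = real (card {i. i < n \<and> fZ (W i \<omega>) = z}) / n"
      unfolding eventually_sequentially real_card_lessThan_filter
      by (intro exI[of _ 1]) (auto simp: U_def sum_subtractf field_simps)
  qed
qed

lemma conv_in_prob_treated_stratum_frequency:
  assumes "z \<in> Zs"
  shows "conv_in_prob M (\<lambda>n \<omega>. real (card (samp (\<lambda>i. I n i \<omega>) (\<lambda>i. fZ (W i \<omega>)) n t z)) / n)
           (\<pi> t * stratum_prob z)"
proof -
  define a where "a n \<omega> = real (card (samp (\<lambda>i. I n i \<omega>) (\<lambda>i. fZ (W i \<omega>)) n t z))" for n \<omega>
  define b where "b n \<omega> = real (card {i. i < n \<and> fZ (W i \<omega>) = z})" for n \<omega>
  have D: "conv_in_prob M (\<lambda>n \<omega>. (a n \<omega> - \<pi> t * b n \<omega>) / b n \<omega>) 0"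
    using balanced[OF assms, of t] by (simp add: a_def b_def)
  have N: "conv_in_prob M (\<lambda>n \<omega>. b n \<omega> / n) (stratum_prob z)"
    using conv_in_prob_stratum_frequency by (simp add: b_def)
  have [measurable]: "(\<lambda>\<omega>. (a n \<omega> - \<pi> t * b n \<omega>) / b n \<omega>) \<in> borel_measurable M"
    "(\<lambda>\<omega>. b n \<omega> / n) \<in> borel_measurable M" for n
    using conv_in_prob_measurable[OF D] conv_in_prob_measurable[OF N] by auto
  have "conv_in_prob M (\<lambda>n \<omega>. (\<lambda>q. fst q * snd q + \<pi> t * snd q) ((a n \<omega> - \<pi> t * b n \<omega>) / b n \<omega>, b n \<omega> / n))
      ((\<lambda>q. fst q * snd q + \<pi> t * snd q) (0, stratum_prob z))"
  proof (rule conv_in_prob_continuous_map[OF conv_in_prob_Pair[OF D N]])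
    show "isCont (\<lambda>q. fst q * snd q + \<pi> t * snd q) (0, stratum_prob z)"
      by (intro continuous_intros)
    show "(\<lambda>\<omega>. (\<lambda>q. fst q * snd q + \<pi> t * snd q) ((a n \<omega> - \<pi> t * b n \<omega>) / b n \<omega>, b n \<omega> / n))
        \<in> borel_measurable M" for n
      unfolding fst_conv snd_conv by measurable
  qed
  moreover have "(a n \<omega> - \<pi> t * b n \<omega>) / b n \<omega> * (b n \<omega> / n) + \<pi> t * (b n \<omega> / n) = a n \<omega> / n" for n \<omega>
  proof (cases "b n \<omega> = 0")
    case True
    have "samp (\<lambda>i. I n i \<omega>) (\<lambda>i. fZ (W i \<omega>)) n t z \<subseteq> {i. i < n \<and> fZ (W i \<omega>) = z}"
      by (auto simp: samp_def)
    then have "a n \<omega> \<le> b n \<omega>"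
      unfolding a_def b_def by (intro of_nat_mono card_mono) auto
    with True show ?thesis
      by (simp add: a_def)
  qed (cases "n = 0"; simp add: field_simps)
  ultimately show ?thesis
    by (simp add: a_def)
qed

definition stratum_avg :: "'z \<Rightarrow> 'k \<Rightarrow> ((real^'k) \<times> 'w \<Rightarrow> 'b::real_vector) \<Rightarrow> nat \<Rightarrow> 'a \<Rightarrow> 'b" where
  "stratum_avg z t g n \<omega> =
     (1 / real n) *\<^sub>R (\<Sum>i<n. if I n i \<omega> = t \<and> fZ (W i \<omega>) = z then g (V i \<omega>) else 0)"

abbreviation stratum_mean :: "'z \<Rightarrow> ((real^'k) \<times> 'w \<Rightarrow> 'b::{banach, second_countable_topology}) \<Rightarrow> 'b" where
  "stratum_mean z g \<equiv> cond_mean M (\<lambda>\<omega>. g (V 0 \<omega>)) (\<lambda>\<omega>. fZ (W 0 \<omega>)) z"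

lemma stratum_avg_measurable [measurable]:
  fixes g :: "(real^'k) \<times> 'w \<Rightarrow> 'b::{second_countable_topology, real_normed_vector}"
  assumes [measurable]: "g \<in> borel_measurable (borel \<Otimes>\<^sub>M MW)"
  shows "stratum_avg z t g n \<in> borel_measurable M"
proof -
  have "stratum_avg z t g n = (\<lambda>\<omega>. (1 / real n) *\<^sub>R
      (\<Sum>i<n. if I n i \<omega> = t then (if fZ (W i \<omega>) = z then g (V i \<omega>) else 0) else 0))"
    by (intro ext) (auto simp: stratum_avg_def intro!: sum.cong arg_cong[where f = "scaleR _"])
  also have "\<dots> \<in> borel_measurable M"
    by (intro borel_measurable_scaleR borel_measurable_const borel_measurable_treated_sum) measurable
  finally show ?thesis .
qed

lemma sum_samp_eq_stratum_avg:
  "(\<Sum>i\<in>samp (\<lambda>i. I n i \<omega>) (\<lambda>i. fZ (W i \<omega>)) n t z. g (V i \<omega>)) = real n *\<^sub>R stratum_avg z t g n \<omega>"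
proof -
  have "samp (\<lambda>i. I n i \<omega>) (\<lambda>i. fZ (W i \<omega>)) n t z = {i \<in> {..<n}. I n i \<omega> = t \<and> fZ (W i \<omega>) = z}"
    by (auto simp: samp_def)
  then have "(\<Sum>i\<in>samp (\<lambda>i. I n i \<omega>) (\<lambda>i. fZ (W i \<omega>)) n t z. g (V i \<omega>))
      = (\<Sum>i<n. if I n i \<omega> = t \<and> fZ (W i \<omega>) = z then g (V i \<omega>) else 0)"
    by (simp only: sum.inter_filter[OF finite_lessThan])
  then show ?thesis
    by (cases "n = 0") (simp_all add: stratum_avg_def)
qed

lemma stratum_mean_real:
  fixes g :: "(real^'k) \<times> 'w \<Rightarrow> real"
  shows "stratum_mean z g = expectation (\<lambda>\<omega>. if fZ (W 0 \<omega>) = z then g (V 0 \<omega>) else 0) / stratum_prob z"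
proof -
  have "(LINT \<omega>|M. indicator {\<omega> \<in> space M. fZ (W 0 \<omega>) = z} \<omega> *\<^sub>R g (V 0 \<omega>))
      = expectation (\<lambda>\<omega>. if fZ (W 0 \<omega>) = z then g (V 0 \<omega>) else 0)"
    by (rule Bochner_Integration.integral_cong) (auto simp: indicator_def)
  then show ?thesis
    by (simp add: cond_mean_def stratum_prob_def)
qed

lemma stratum_avg_eq_treated_avg:
  fixes g :: "(real^'k) \<times> 'w \<Rightarrow> real"
  shows "stratum_avg z t g n \<omega> =
    (\<Sum>i<n. if I n i \<omega> = t then (if fZ (W i \<omega>) = z then g (V i \<omega>) - m else 0) else 0) / n
    + m * (real (card (samp (\<lambda>i. I n i \<omega>) (\<lambda>i. fZ (W i \<omega>)) n t z)) / n)"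
proof -
  have "real (card (samp (\<lambda>i. I n i \<omega>) (\<lambda>i. fZ (W i \<omega>)) n t z))
      = (\<Sum>i<n. if I n i \<omega> = t \<and> fZ (W i \<omega>) = z then 1 else 0)"
    unfolding samp_def by (rule real_card_lessThan_filter)
  moreover have "(\<Sum>i<n. if I n i \<omega> = t then (if fZ (W i \<omega>) = z then g (V i \<omega>) - m else 0) else 0)
      = (\<Sum>i<n. if I n i \<omega> = t \<and> fZ (W i \<omega>) = z then g (V i \<omega>) else 0)
        - m * (\<Sum>i<n. if I n i \<omega> = t \<and> fZ (W i \<omega>) = z then 1 else 0)"
    by (simp add: sum_distrib_left sum_subtractf[symmetric]) (intro sum.cong; simp)
  ultimately show ?thesis
    by (simp add: stratum_avg_def diff_divide_distrib)
qed

lemma conv_in_prob_stratum_avg_real: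
  fixes g :: "(real^'k) \<times> 'w \<Rightarrow> real"
  assumes [measurable]: "g \<in> borel_measurable (borel \<Otimes>\<^sub>M MW)"
    and int: "integrable M (\<lambda>\<omega>. g (V 0 \<omega>))" and "z \<in> Zs" and pos: "stratum_prob z > 0"
  shows "conv_in_prob M (stratum_avg z t g) ((\<pi> t * stratum_prob z) * stratum_mean z g)"
proof -
  define m where "m = stratum_mean z g"
  define f where "f v = (if fZ (snd v) = z then g v - m else 0)" for v
  have [measurable]: "f \<in> borel_measurable (borel \<Otimes>\<^sub>M MW)"
    unfolding f_def by measurable
  have int_ind: "integrable M (\<lambda>\<omega>. if fZ (W 0 \<omega>) = z then 1 else 0 :: real)"
    by (intro integrable_const_bound[where B = 1]) auto
  have int_g: "integrable M (\<lambda>\<omega>. if fZ (W 0 \<omega>) = z then g (V 0 \<omega>) else 0)"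
    using int by (rule Bochner_Integration.integrable_bound) auto
  have f_V: "f (V 0 \<omega>) = (if fZ (W 0 \<omega>) = z then g (V 0 \<omega>) else 0) - m * (if fZ (W 0 \<omega>) = z then 1 else 0)" for \<omega>
    by (simp add: f_def)
  have "integrable M (\<lambda>\<omega>. f (V 0 \<omega>))"
    unfolding f_V using int_g int_ind by auto
  moreover have "expectation (\<lambda>\<omega>. f (V 0 \<omega>)) = 0"
    unfolding f_V using int_g int_ind pos expectation_stratum_indicator[of 0 z]
    by (simp add: m_def stratum_mean_real)
  ultimately have treated: "conv_in_prob M (\<lambda>n \<omega>. (\<Sum>i<n. if I n i \<omega> = t then f (V i \<omega>) else 0) / n) 0"
    by (intro conv_in_prob_treated_avg[where z = z] pos) (auto simp: f_def)
  have NT: "conv_in_prob M (\<lambda>n \<omega>. real (card (samp (\<lambda>i. I n i \<omega>) (\<lambda>i. fZ (W i \<omega>)) n t z)) / n)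
      (\<pi> t * stratum_prob z)"
    by (rule conv_in_prob_treated_stratum_frequency[OF \<open>z \<in> Zs\<close>])
  have "conv_in_prob M (\<lambda>n \<omega>. m * (real (card (samp (\<lambda>i. I n i \<omega>) (\<lambda>i. fZ (W i \<omega>)) n t z)) / n))
      (m * (\<pi> t * stratum_prob z))"
  proof (rule conv_in_prob_continuous_map[OF NT])
    show "(\<lambda>\<omega>. m * (real (card (samp (\<lambda>i. I n i \<omega>) (\<lambda>i. fZ (W i \<omega>)) n t z)) / n)) \<in> borel_measurable M" for n
      by (rule borel_measurable_times[OF borel_measurable_const conv_in_prob_measurable[OF NT]])
  qed (intro continuous_intros)
  from conv_in_prob_add[OF treated this]
  have "conv_in_prob M (\<lambda>n \<omega>. (\<Sum>i<n. if I n i \<omega> = t then f (V i \<omega>) else 0) / n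
      + m * (real (card (samp (\<lambda>i. I n i \<omega>) (\<lambda>i. fZ (W i \<omega>)) n t z)) / n)) ((\<pi> t * stratum_prob z) * m)"
    by (simp add: mult.commute)
  moreover have "(\<Sum>i<n. if I n i \<omega> = t then f (V i \<omega>) else 0) / n
      + m * (real (card (samp (\<lambda>i. I n i \<omega>) (\<lambda>i. fZ (W i \<omega>)) n t z)) / n) = stratum_avg z t g n \<omega>" for n \<omega>
    by (simp add: f_def stratum_avg_eq_treated_avg[of z t g n \<omega> m] cong: if_cong)
  ultimately show ?thesis
    by (simp add: m_def)
qed

lemma conv_in_prob_stratum_avg:
  fixes g :: "(real^'k) \<times> 'w \<Rightarrow> 'b::euclidean_space"
  assumes [measurable]: "g \<in> borel_measurable (borel \<Otimes>\<^sub>M MW)"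
    and int: "integrable M (\<lambda>\<omega>. g (V 0 \<omega>))" and "z \<in> Zs" and pos: "stratum_prob z > 0"
  shows "conv_in_prob M (stratum_avg z t g) ((\<pi> t * stratum_prob z) *\<^sub>R stratum_mean z g)"
proof (rule conv_in_prob_euclidean)
  show "stratum_avg z t g n \<in> borel_measurable M" for n
    by measurable
  fix b :: 'b
  have "conv_in_prob M (stratum_avg z t (\<lambda>v. g v \<bullet> b)) ((\<pi> t * stratum_prob z) * stratum_mean z (\<lambda>v. g v \<bullet> b))"
    using int by (intro conv_in_prob_stratum_avg_real \<open>z \<in> Zs\<close> pos) auto
  moreover have "stratum_avg z t (\<lambda>v. g v \<bullet> b) = (\<lambda>n \<omega>. stratum_avg z t g n \<omega> \<bullet> b)"
    by (intro ext) (simp add: stratum_avg_def inner_sum_left if_distrib[of "\<lambda>x. x \<bullet> b"] cong: if_cong)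
  moreover have "stratum_mean z (\<lambda>v. g v \<bullet> b) = stratum_mean z g \<bullet> b"
    by (rule cond_mean_bounded_linear[OF bounded_linear_inner_left _ int]) measurable
  ultimately show "conv_in_prob M (\<lambda>n \<omega>. stratum_avg z t g n \<omega> \<bullet> b)
      (((\<pi> t * stratum_prob z) *\<^sub>R stratum_mean z g) \<bullet> b)"
    by simp
qed

lemma conv_in_prob_stratum_avg_one:
  assumes "z \<in> Zs" and pos: "stratum_prob z > 0"
  shows "conv_in_prob M (stratum_avg z l (\<lambda>_. 1)) (\<pi> l * stratum_prob z)"
proof -
  have "conv_in_prob M (stratum_avg z l (\<lambda>_. 1)) (\<pi> l * stratum_prob z * stratum_mean z (\<lambda>_. 1 :: real))"
    by (rule conv_in_prob_stratum_avg_real) (use assms in auto)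
  moreover have "stratum_mean z (\<lambda>_. 1 :: real) = 1"
    using pos by (intro cond_mean_const) (auto simp: stratum_prob_def)
  ultimately show ?thesis
    by simp
qed

definition Sxx_avg :: "'z \<Rightarrow> 'k \<Rightarrow> nat \<Rightarrow> 'a \<Rightarrow> real^'p^'p" where
  "Sxx_avg z l n \<omega> = (1 / real n) *\<^sub>R Sxx (\<lambda>i. fX (W i \<omega>)) (samp (\<lambda>i. I n i \<omega>) (\<lambda>i. fZ (W i \<omega>)) n l z)"

definition Sxy_avg :: "'z \<Rightarrow> 'k \<Rightarrow> nat \<Rightarrow> 'a \<Rightarrow> real^'p" where
  "Sxy_avg z l n \<omega> =
     (1 / real n) *\<^sub>R Sxy (\<lambda>i. fX (W i \<omega>)) (\<lambda>i. Y i \<omega> $ I n i \<omega>) (samp (\<lambda>i. I n i \<omega>) (\<lambda>i. fZ (W i \<omega>)) n l z)"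

lemma samp_0 [simp]: "samp J Zf 0 l z = {}"
  by (simp add: samp_def)

lemma betahat_t_eq:
  "betahat_t (\<lambda>i. I n i \<omega>) (\<lambda>i. fZ (W i \<omega>)) (\<lambda>i. fX (W i \<omega>)) (\<lambda>i. Y i \<omega> $ I n i \<omega>) n t z
     = inv0 (Sxx_avg z t n \<omega>) *v Sxy_avg z t n \<omega>"
proof (cases "n = 0")
  case True
  then show ?thesis
    by (simp add: betahat_t_def Sxx_avg_def Sxy_avg_def Sxx_def Sxy_def)
next
  case False
  then show ?thesis
    by (simp add: betahat_t_def Sxx_avg_def Sxy_avg_def inv0_scaleR_mult_vec)
qed

lemma betahat_eq:
  "betahat (\<lambda>i. I n i \<omega>) (\<lambda>i. fZ (W i \<omega>)) (\<lambda>i. fX (W i \<omega>)) (\<lambda>i. Y i \<omega> $ I n i \<omega>) n z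
     = inv0 (\<Sum>l\<in>UNIV. Sxx_avg z l n \<omega>) *v (\<Sum>l\<in>UNIV. Sxy_avg z l n \<omega>)"
proof (cases "n = 0")
  case True
  then show ?thesis
    by (simp add: betahat_def Sxx_avg_def Sxy_avg_def Sxx_def Sxy_def)
next
  case False
  then show ?thesis
    by (simp add: betahat_def Sxx_avg_def Sxy_avg_def inv0_scaleR_mult_vec flip: scaleR_sum_right)
qed

lemma Sxx_avg_eq:
  "Sxx_avg z l n \<omega> = stratum_avg z l (\<lambda>v. outer (fX (snd v)) (fX (snd v))) n \<omega>
     - (1 / stratum_avg z l (\<lambda>_. 1) n \<omega>) *\<^sub>R
         outer (stratum_avg z l (\<lambda>v. fX (snd v)) n \<omega>) (stratum_avg z l (\<lambda>v. fX (snd v)) n \<omega>)"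
proof -
  let ?S = "samp (\<lambda>i. I n i \<omega>) (\<lambda>i. fZ (W i \<omega>)) n l z"
  have card: "real (card ?S) = real n * stratum_avg z l (\<lambda>_. 1) n \<omega>"
    using sum_samp_eq_stratum_avg[where n = n and \<omega> = \<omega> and t = l and z = z and g = "\<lambda>_. 1 :: real"] by simp
  have "Sxx_avg z l n \<omega> = (1 / real n) *\<^sub>R (real n *\<^sub>R stratum_avg z l (\<lambda>v. outer (fX (snd v)) (fX (snd v))) n \<omega>
      - (1 / (real n * stratum_avg z l (\<lambda>_. 1) n \<omega>)) *\<^sub>R
          outer (real n *\<^sub>R stratum_avg z l (\<lambda>v. fX (snd v)) n \<omega>) (real n *\<^sub>R stratum_avg z l (\<lambda>v. fX (snd v)) n \<omega>))"
    unfolding Sxx_avg_def Sxx_eq card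
    using sum_samp_eq_stratum_avg[where n = n and \<omega> = \<omega> and t = l and z = z and g = "\<lambda>v. outer (fX (snd v)) (fX (snd v))"]
      sum_samp_eq_stratum_avg[where n = n and \<omega> = \<omega> and t = l and z = z and g = "\<lambda>v. fX (snd v)"]
    by simp
  also have "\<dots> = stratum_avg z l (\<lambda>v. outer (fX (snd v)) (fX (snd v))) n \<omega>
     - (1 / stratum_avg z l (\<lambda>_. 1) n \<omega>) *\<^sub>R
         outer (stratum_avg z l (\<lambda>v. fX (snd v)) n \<omega>) (stratum_avg z l (\<lambda>v. fX (snd v)) n \<omega>)"
    by (cases "n = 0") (simp_all add: stratum_avg_def bounded_bilinear.scaleR_left[OF bounded_bilinear_outer]
        bounded_bilinear.scaleR_right[OF bounded_bilinear_outer] scaleR_diff_right)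
  finally show ?thesis .
qed

lemma Sxy_avg_eq:
  "Sxy_avg z l n \<omega> = stratum_avg z l (\<lambda>v. (fst v $ l) *\<^sub>R fX (snd v)) n \<omega>
     - (stratum_avg z l (\<lambda>v. fst v $ l) n \<omega> / stratum_avg z l (\<lambda>_. 1) n \<omega>) *\<^sub>R stratum_avg z l (\<lambda>v. fX (snd v)) n \<omega>"
proof -
  let ?S = "samp (\<lambda>i. I n i \<omega>) (\<lambda>i. fZ (W i \<omega>)) n l z"
  have obs: "Y i \<omega> $ I n i \<omega> = fst (V i \<omega>) $ l" if "i \<in> ?S" for i
    using that by (simp add: samp_def)
  have card: "real (card ?S) = real n * stratum_avg z l (\<lambda>_. 1) n \<omega>"
    using sum_samp_eq_stratum_avg[where n = n and \<omega> = \<omega> and t = l and z = z and g = "\<lambda>_. 1 :: real"] by simp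
  have "(\<Sum>i\<in>?S. (Y i \<omega> $ I n i \<omega>) *\<^sub>R fX (W i \<omega>)) = real n *\<^sub>R stratum_avg z l (\<lambda>v. (fst v $ l) *\<^sub>R fX (snd v)) n \<omega>"
    "(\<Sum>i\<in>?S. Y i \<omega> $ I n i \<omega>) = real n * stratum_avg z l (\<lambda>v. fst v $ l) n \<omega>"
    using obs sum_samp_eq_stratum_avg[where n = n and \<omega> = \<omega> and t = l and z = z and g = "\<lambda>v. (fst v $ l) *\<^sub>R fX (snd v)"]
      sum_samp_eq_stratum_avg[where n = n and \<omega> = \<omega> and t = l and z = z and g = "\<lambda>v. fst v $ l"] by (simp_all cong: sum.cong)
  then have "Sxy_avg z l n \<omega> = (1 / real n) *\<^sub>R (real n *\<^sub>R stratum_avg z l (\<lambda>v. (fst v $ l) *\<^sub>R fX (snd v)) n \<omega>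
      - (real n * stratum_avg z l (\<lambda>v. fst v $ l) n \<omega> / (real n * stratum_avg z l (\<lambda>_. 1) n \<omega>)) *\<^sub>R
          (real n *\<^sub>R stratum_avg z l (\<lambda>v. fX (snd v)) n \<omega>))"
    unfolding Sxy_avg_def Sxy_eq card
    using sum_samp_eq_stratum_avg[where n = n and \<omega> = \<omega> and t = l and z = z and g = "\<lambda>v. fX (snd v)"] by simp
  also have "\<dots> = stratum_avg z l (\<lambda>v. (fst v $ l) *\<^sub>R fX (snd v)) n \<omega>
     - (stratum_avg z l (\<lambda>v. fst v $ l) n \<omega> / stratum_avg z l (\<lambda>_. 1) n \<omega>) *\<^sub>R stratum_avg z l (\<lambda>v. fX (snd v)) n \<omega>"
    by (cases "n = 0") (simp_all add: stratum_avg_def scaleR_diff_right)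
  finally show ?thesis .
qed

lemma stratum_sets [measurable]: "{\<omega> \<in> space M. fZ (W 0 \<omega>) = z} \<in> sets M"
  by measurable

lemma conv_in_prob_Sxx_avg:
  assumes X2: "integrable M (\<lambda>\<omega>. (norm (fX (W 0 \<omega>)))\<^sup>2)"
    and "z \<in> Zs" and pos: "stratum_prob z > 0" and "\<pi> l > 0"
  shows "conv_in_prob M (Sxx_avg z l) ((\<pi> l * stratum_prob z) *\<^sub>R cond_var M (\<lambda>\<omega>. fX (W 0 \<omega>)) (\<lambda>\<omega>. fZ (W 0 \<omega>)) z)"
proof -
  define q where "q = \<pi> l * stratum_prob z"
  define h where "h x = fst (snd x) - (1 / fst x) *\<^sub>R outer (snd (snd x)) (snd (snd x))"
    for x :: "real \<times> (real^'p^'p) \<times> (real^'p)"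
  let ?X = "\<lambda>v. fX (snd v)" and ?XX = "\<lambda>v. outer (fX (snd v)) (fX (snd v))"
  have "q \<noteq> 0" "prob {\<omega> \<in> space M. fZ (W 0 \<omega>) = z} \<noteq> 0"
    using pos \<open>\<pi> l > 0\<close> by (simp_all add: q_def stratum_prob_def)
  have int_X: "integrable M (\<lambda>\<omega>. fX (W 0 \<omega>))"
    using X2 by (rule integrable_if_norm_square_integrable[rotated]) simp
  have "integrable M (\<lambda>\<omega>. norm (outer (fX (W 0 \<omega>)) (fX (W 0 \<omega>))))"
    using X2 by (simp add: norm_outer power2_eq_square)
  then have int_XX: "integrable M (\<lambda>\<omega>. outer (fX (W 0 \<omega>)) (fX (W 0 \<omega>)))"
    by (subst (asm) integrable_norm_iff) measurable
  have "conv_in_prob M (\<lambda>n \<omega>. h (stratum_avg z l (\<lambda>_. 1) n \<omega>, stratum_avg z l ?XX n \<omega>, stratum_avg z l ?X n \<omega>))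
      (h (q, q *\<^sub>R stratum_mean z ?XX, q *\<^sub>R stratum_mean z ?X))"
  proof (rule conv_in_prob_continuous_map[OF conv_in_prob_Pair[OF _ conv_in_prob_Pair]])
    show "conv_in_prob M (stratum_avg z l (\<lambda>_. 1)) q"
      unfolding q_def using \<open>z \<in> Zs\<close> pos by (rule conv_in_prob_stratum_avg_one)
    show "conv_in_prob M (stratum_avg z l ?XX) (q *\<^sub>R stratum_mean z ?XX)"
      unfolding q_def using int_XX \<open>z \<in> Zs\<close> pos by (intro conv_in_prob_stratum_avg) auto
    show "conv_in_prob M (stratum_avg z l ?X) (q *\<^sub>R stratum_mean z ?X)"
      unfolding q_def using int_X \<open>z \<in> Zs\<close> pos by (intro conv_in_prob_stratum_avg) auto
    show "isCont h (q, q *\<^sub>R stratum_mean z ?XX, q *\<^sub>R stratum_mean z ?X)"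
      unfolding h_def using \<open>q \<noteq> 0\<close> by (intro continuous_intros) auto
    show "(\<lambda>\<omega>. h (stratum_avg z l (\<lambda>_. 1) n \<omega>, stratum_avg z l ?XX n \<omega>, stratum_avg z l ?X n \<omega>))
        \<in> borel_measurable M" for n
      unfolding h_def fst_conv snd_conv by measurable
  qed
  moreover have "(1 / q) *\<^sub>R outer (q *\<^sub>R x) (q *\<^sub>R x) = q *\<^sub>R outer x x" for x :: "real^'p"
    using \<open>q \<noteq> 0\<close> by (simp add: vec_eq_iff)
  then have "h (q, q *\<^sub>R stratum_mean z ?XX, q *\<^sub>R stratum_mean z ?X)
      = q *\<^sub>R cond_var M (\<lambda>\<omega>. fX (W 0 \<omega>)) (\<lambda>\<omega>. fZ (W 0 \<omega>)) z"
    using cond_var_eq[OF stratum_sets \<open>prob _ \<noteq> 0\<close> int_X int_XX] by (simp add: h_def scaleR_diff_right)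
  moreover have "Sxx_avg z l = (\<lambda>n \<omega>. h (stratum_avg z l (\<lambda>_. 1) n \<omega>, stratum_avg z l ?XX n \<omega>, stratum_avg z l ?X n \<omega>))"
    by (intro ext) (simp add: h_def Sxx_avg_eq)
  ultimately show ?thesis
    by (simp add: q_def)
qed

lemma conv_in_prob_Sxy_avg:
  assumes X2: "integrable M (\<lambda>\<omega>. (norm (fX (W 0 \<omega>)))\<^sup>2)"
    and Y2: "integrable M (\<lambda>\<omega>. (Y 0 \<omega> $ l)\<^sup>2)"
    and XY2: "integrable M (\<lambda>\<omega>. (norm ((Y 0 \<omega> $ l) *\<^sub>R fX (W 0 \<omega>)))\<^sup>2)"
    and "z \<in> Zs" and pos: "stratum_prob z > 0" and "\<pi> l > 0"
  shows "conv_in_prob M (Sxy_avg z l)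
    ((\<pi> l * stratum_prob z) *\<^sub>R cond_cov M (\<lambda>\<omega>. fX (W 0 \<omega>)) (\<lambda>\<omega>. Y 0 \<omega> $ l) (\<lambda>\<omega>. fZ (W 0 \<omega>)) z)"
proof -
  define q where "q = \<pi> l * stratum_prob z"
  define h where "h x = fst (snd x) - (fst (snd (snd x)) / fst x) *\<^sub>R snd (snd (snd x))"
    for x :: "real \<times> (real^'p) \<times> real \<times> (real^'p)"
  let ?X = "\<lambda>v. fX (snd v)" and ?Y = "\<lambda>v. fst v $ l" and ?YX = "\<lambda>v. (fst v $ l) *\<^sub>R fX (snd v)"
  have "q \<noteq> 0" "prob {\<omega> \<in> space M. fZ (W 0 \<omega>) = z} \<noteq> 0"
    using pos \<open>\<pi> l > 0\<close> by (simp_all add: q_def stratum_prob_def)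
  have int_X: "integrable M (\<lambda>\<omega>. fX (W 0 \<omega>))"
    using X2 by (rule integrable_if_norm_square_integrable[rotated]) simp
  have int_Y: "integrable M (\<lambda>\<omega>. Y 0 \<omega> $ l)"
    by (rule square_integrable_imp_integrable[OF _ Y2]) simp
  have int_YX: "integrable M (\<lambda>\<omega>. (Y 0 \<omega> $ l) *\<^sub>R fX (W 0 \<omega>))"
    using XY2 by (rule integrable_if_norm_square_integrable[rotated]) simp
  have "conv_in_prob M
      (\<lambda>n \<omega>. h (stratum_avg z l (\<lambda>_. 1) n \<omega>, stratum_avg z l ?YX n \<omega>, stratum_avg z l ?Y n \<omega>, stratum_avg z l ?X n \<omega>))
      (h (q, q *\<^sub>R stratum_mean z ?YX, q * stratum_mean z ?Y, q *\<^sub>R stratum_mean z ?X))"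
  proof (rule conv_in_prob_continuous_map[OF conv_in_prob_Pair[OF _ conv_in_prob_Pair[OF _ conv_in_prob_Pair]]])
    show "conv_in_prob M (stratum_avg z l (\<lambda>_. 1)) q"
      unfolding q_def using \<open>z \<in> Zs\<close> pos by (rule conv_in_prob_stratum_avg_one)
    show "conv_in_prob M (stratum_avg z l ?YX) (q *\<^sub>R stratum_mean z ?YX)"
      unfolding q_def using int_YX \<open>z \<in> Zs\<close> pos by (intro conv_in_prob_stratum_avg) auto
    show "conv_in_prob M (stratum_avg z l ?Y) (q * stratum_mean z ?Y)"
      unfolding q_def using int_Y \<open>z \<in> Zs\<close> pos by (intro conv_in_prob_stratum_avg_real) auto
    show "conv_in_prob M (stratum_avg z l ?X) (q *\<^sub>R stratum_mean z ?X)"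
      unfolding q_def using int_X \<open>z \<in> Zs\<close> pos by (intro conv_in_prob_stratum_avg) auto
    show "isCont h (q, q *\<^sub>R stratum_mean z ?YX, q * stratum_mean z ?Y, q *\<^sub>R stratum_mean z ?X)"
      unfolding h_def using \<open>q \<noteq> 0\<close> by (intro continuous_intros) auto
    show "(\<lambda>\<omega>. h (stratum_avg z l (\<lambda>_. 1) n \<omega>, stratum_avg z l ?YX n \<omega>, stratum_avg z l ?Y n \<omega>,
        stratum_avg z l ?X n \<omega>)) \<in> borel_measurable M" for n
      unfolding h_def fst_conv snd_conv by measurable
  qed
  moreover have "h (q, q *\<^sub>R stratum_mean z ?YX, q * stratum_mean z ?Y, q *\<^sub>R stratum_mean z ?X)
      = q *\<^sub>R cond_cov M (\<lambda>\<omega>. fX (W 0 \<omega>)) (\<lambda>\<omega>. Y 0 \<omega> $ l) (\<lambda>\<omega>. fZ (W 0 \<omega>)) z"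
    using \<open>q \<noteq> 0\<close> cond_cov_eq[OF stratum_sets \<open>prob _ \<noteq> 0\<close> int_X int_Y int_YX]
    by (simp add: h_def scaleR_diff_right)
  moreover have "Sxy_avg z l
      = (\<lambda>n \<omega>. h (stratum_avg z l (\<lambda>_. 1) n \<omega>, stratum_avg z l ?YX n \<omega>, stratum_avg z l ?Y n \<omega>, stratum_avg z l ?X n \<omega>))"
    by (intro ext) (simp add: h_def Sxy_avg_eq)
  ultimately show ?thesis
    by (simp add: q_def)
qed

lemma stratum_prob_pos_if_posdef:
  assumes "posdef (cond_var M (\<lambda>\<omega>. fX (W 0 \<omega>)) (\<lambda>\<omega>. fZ (W 0 \<omega>)) z)"
  shows "stratum_prob z > 0"
  using posdef_cond_var_imp_measure_nonzero[OF assms] by (simp add: stratum_prob_def zero_less_measure_iff)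

theorem betahat_t_consistent:
  assumes X2: "integrable M (\<lambda>\<omega>. (norm (fX (W 0 \<omega>)))\<^sup>2)"
    and Y2: "integrable M (\<lambda>\<omega>. (Y 0 \<omega> $ t)\<^sup>2)"
    and XY2: "integrable M (\<lambda>\<omega>. (norm ((Y 0 \<omega> $ t) *\<^sub>R fX (W 0 \<omega>)))\<^sup>2)"
    and "z \<in> Zs" and "\<pi> t > 0"
    and pd: "posdef (cond_var M (\<lambda>\<omega>. fX (W 0 \<omega>)) (\<lambda>\<omega>. fZ (W 0 \<omega>)) z)"
  shows "conv_in_prob M
     (\<lambda>n \<omega>. betahat_t (\<lambda>i. I n i \<omega>) (\<lambda>i. fZ (W i \<omega>)) (\<lambda>i. fX (W i \<omega>)) (\<lambda>i. Y i \<omega> $ I n i \<omega>) n t z)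
     (matrix_inv (cond_var M (\<lambda>\<omega>. fX (W 0 \<omega>)) (\<lambda>\<omega>. fZ (W 0 \<omega>)) z)
        *v cond_cov M (\<lambda>\<omega>. fX (W 0 \<omega>)) (\<lambda>\<omega>. Y 0 \<omega> $ t) (\<lambda>\<omega>. fZ (W 0 \<omega>)) z)"
proof -
  define \<Sigma> where "\<Sigma> = cond_var M (\<lambda>\<omega>. fX (W 0 \<omega>)) (\<lambda>\<omega>. fZ (W 0 \<omega>)) z"
  define c where "c = cond_cov M (\<lambda>\<omega>. fX (W 0 \<omega>)) (\<lambda>\<omega>. Y 0 \<omega> $ t) (\<lambda>\<omega>. fZ (W 0 \<omega>)) z"
  define q where "q = \<pi> t * stratum_prob z"
  have pos: "stratum_prob z > 0"
    using pd by (rule stratum_prob_pos_if_posdef)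
  then have "q \<noteq> 0"
    using \<open>\<pi> t > 0\<close> by (simp add: q_def)
  have "det \<Sigma> \<noteq> 0"
    unfolding \<Sigma>_def using pd by (rule posdef_det_nonzero)
  have "conv_in_prob M (\<lambda>n \<omega>. inv0 (Sxx_avg z t n \<omega>) *v Sxy_avg z t n \<omega>) (inv0 (q *\<^sub>R \<Sigma>) *v (q *\<^sub>R c))"
    using \<open>q \<noteq> 0\<close> \<open>det \<Sigma> \<noteq> 0\<close> unfolding \<Sigma>_def c_def q_def
    by (intro conv_in_prob_inv0_mult_vec conv_in_prob_Sxx_avg conv_in_prob_Sxy_avg assms pos)
      (simp_all add: det_scaleR)
  moreover have "inv0 (q *\<^sub>R \<Sigma>) *v (q *\<^sub>R c) = matrix_inv \<Sigma> *v c"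
    using \<open>det \<Sigma> \<noteq> 0\<close> by (simp only: inv0_scaleR_mult_vec[OF \<open>q \<noteq> 0\<close>]) (simp add: inv0_def invertible_det_nz)
  ultimately show ?thesis
    by (simp add: betahat_t_eq \<Sigma>_def c_def)
qed

theorem betahat_consistent:
  assumes X2: "integrable M (\<lambda>\<omega>. (norm (fX (W 0 \<omega>)))\<^sup>2)"
    and Y2: "\<And>l. integrable M (\<lambda>\<omega>. (Y 0 \<omega> $ l)\<^sup>2)"
    and XY2: "\<And>l. integrable M (\<lambda>\<omega>. (norm ((Y 0 \<omega> $ l) *\<^sub>R fX (W 0 \<omega>)))\<^sup>2)"
    and "z \<in> Zs" and \<pi>_pos: "\<And>l. \<pi> l > 0" and \<pi>_sum: "(\<Sum>l\<in>UNIV. \<pi> l) = 1"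
    and pd: "posdef (cond_var M (\<lambda>\<omega>. fX (W 0 \<omega>)) (\<lambda>\<omega>. fZ (W 0 \<omega>)) z)"
  shows "conv_in_prob M
     (\<lambda>n \<omega>. betahat (\<lambda>i. I n i \<omega>) (\<lambda>i. fZ (W i \<omega>)) (\<lambda>i. fX (W i \<omega>)) (\<lambda>i. Y i \<omega> $ I n i \<omega>) n z)
     (\<Sum>l\<in>UNIV. \<pi> l *\<^sub>R (matrix_inv (cond_var M (\<lambda>\<omega>. fX (W 0 \<omega>)) (\<lambda>\<omega>. fZ (W 0 \<omega>)) z)
        *v cond_cov M (\<lambda>\<omega>. fX (W 0 \<omega>)) (\<lambda>\<omega>. Y 0 \<omega> $ l) (\<lambda>\<omega>. fZ (W 0 \<omega>)) z))"
proof -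
  define \<Sigma> where "\<Sigma> = cond_var M (\<lambda>\<omega>. fX (W 0 \<omega>)) (\<lambda>\<omega>. fZ (W 0 \<omega>)) z"
  define c where "c l = cond_cov M (\<lambda>\<omega>. fX (W 0 \<omega>)) (\<lambda>\<omega>. Y 0 \<omega> $ l) (\<lambda>\<omega>. fZ (W 0 \<omega>)) z" for l
  define p where "p = stratum_prob z"
  have pos: "p > 0"
    unfolding p_def using pd by (rule stratum_prob_pos_if_posdef)
  have "det \<Sigma> \<noteq> 0"
    unfolding \<Sigma>_def using pd by (rule posdef_det_nonzero)
  have "conv_in_prob M (\<lambda>n \<omega>. \<Sum>l\<in>UNIV. Sxx_avg z l n \<omega>) (\<Sum>l\<in>UNIV. (\<pi> l * p) *\<^sub>R \<Sigma>)"
    unfolding \<Sigma>_def p_def using pos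
    by (intro conv_in_prob_sum conv_in_prob_Sxx_avg X2 \<open>z \<in> Zs\<close> \<pi>_pos) (simp_all add: p_def)
  moreover have "(\<Sum>l\<in>UNIV. (\<pi> l * p) *\<^sub>R \<Sigma>) = p *\<^sub>R \<Sigma>"
    using \<pi>_sum by (simp add: scaleR_sum_left[symmetric] sum_distrib_right[symmetric])
  moreover have "conv_in_prob M (\<lambda>n \<omega>. \<Sum>l\<in>UNIV. Sxy_avg z l n \<omega>) (\<Sum>l\<in>UNIV. (\<pi> l * p) *\<^sub>R c l)"
    unfolding c_def p_def using pos
    by (intro conv_in_prob_sum conv_in_prob_Sxy_avg X2 Y2 XY2 \<open>z \<in> Zs\<close> \<pi>_pos) (simp_all add: p_def)
  moreover have "(\<Sum>l\<in>UNIV. (\<pi> l * p) *\<^sub>R c l) = p *\<^sub>R (\<Sum>l\<in>UNIV. \<pi> l *\<^sub>R c l)"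
    by (simp add: scaleR_sum_right mult.commute)
  ultimately have "conv_in_prob M (\<lambda>n \<omega>. inv0 (\<Sum>l\<in>UNIV. Sxx_avg z l n \<omega>) *v (\<Sum>l\<in>UNIV. Sxy_avg z l n \<omega>))
      (inv0 (p *\<^sub>R \<Sigma>) *v (p *\<^sub>R (\<Sum>l\<in>UNIV. \<pi> l *\<^sub>R c l)))"
    using pos \<open>det \<Sigma> \<noteq> 0\<close> by (intro conv_in_prob_inv0_mult_vec) (simp_all add: det_scaleR)
  moreover have "inv0 (p *\<^sub>R \<Sigma>) *v (p *\<^sub>R (\<Sum>l\<in>UNIV. \<pi> l *\<^sub>R c l)) = (\<Sum>l\<in>UNIV. \<pi> l *\<^sub>R (matrix_inv \<Sigma> *v c l))"
    using pos \<open>det \<Sigma> \<noteq> 0\<close>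
    by (simp only: inv0_scaleR_mult_vec less_irrefl)
      (simp add: inv0_def invertible_det_nz linear_sum[OF matrix_vector_mul_linear] matrix_vector_mult_scaleR o_def)
  ultimately show ?thesis
    by (simp add: betahat_eq \<Sigma>_def c_def)
qed

end

theorem lemma1:
  fixes M :: "'a measure"
    and MW :: "'w measure"
    and Y :: "nat \<Rightarrow> 'a \<Rightarrow> real^'k"
    and W :: "nat \<Rightarrow> 'a \<Rightarrow> 'w"
    and fZ :: "'w \<Rightarrow> 'z"
    and fX :: "'w \<Rightarrow> real^'p"
    and Zs :: "'z set"
    and I :: "nat \<Rightarrow> nat \<Rightarrow> 'a \<Rightarrow> 'k"
    and \<pi> :: "'k \<Rightarrow> real"
  assumes P: "prob_space M"
    and k2: "CARD('k) \<ge> 2"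
    and pi_pos: "\<And>t. 0 < \<pi> t \<and> \<pi> t < 1"
    and pi_sum: "(\<Sum>t\<in>UNIV. \<pi> t) = 1"
    and fX_meas: "fX \<in> borel_measurable MW"
    and fZ_meas: "fZ \<in> measurable MW (count_space UNIV)"
    and Zs_fin: "finite Zs"
    and fZ_Zs: "\<And>w. w \<in> space MW \<Longrightarrow> fZ w \<in> Zs"
    and I_meas: "\<And>n i. i < n \<Longrightarrow> I n i \<in> measurable M (count_space UNIV)"
    (* (C1) *)
    and C1_indep: "prob_space.indep_vars M (\<lambda>_. borel \<Otimes>\<^sub>M MW) (\<lambda>i \<omega>. (Y i \<omega>, W i \<omega>)) UNIV"
    and C1_ident: "\<And>i. distr M (borel \<Otimes>\<^sub>M MW) (\<lambda>\<omega>. (Y i \<omega>, W i \<omega>))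
                       = distr M (borel \<Otimes>\<^sub>M MW) (\<lambda>\<omega>. (Y 0 \<omega>, W 0 \<omega>))"
    and C1_mom: "\<And>t. integrable M (\<lambda>\<omega>. (Y 0 \<omega> $ t)\<^sup>2)"
    (* (C2) *)
    and C2: "\<And>n. cond_indep_disc M
               (\<lambda>\<omega>. restrict (\<lambda>i. I n i \<omega>) {..<n}) (PiM {..<n} (\<lambda>_. count_space UNIV))
               (\<lambda>\<omega>. restrict (\<lambda>i. (Y i \<omega>, W i \<omega>)) {..<n}) (PiM {..<n} (\<lambda>_. borel \<Otimes>\<^sub>M MW))
               (\<lambda>\<omega>. restrict (\<lambda>i. fZ (W i \<omega>)) {..<n})"
    (* (C3) *)
    and C3_prob: "\<And>n i t zz. i < n \<Longrightarrow>
               measure M {\<omega>\<in>space M. I n i \<omega> = t \<and> restrict (\<lambda>j. fZ (W j \<omega>)) {..<n} = zz}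
             = \<pi> t * measure M {\<omega>\<in>space M. restrict (\<lambda>j. fZ (W j \<omega>)) {..<n} = zz}"
    and C3_D: "\<And>z t. z \<in> Zs \<Longrightarrow> conv_in_prob M
               (\<lambda>n \<omega>. (real (card (samp (\<lambda>i. I n i \<omega>) (\<lambda>i. fZ (W i \<omega>)) n t z)) - \<pi> t * real (card {i. i < n \<and> fZ (W i \<omega>) = z}))
                       / real (card {i. i < n \<and> fZ (W i \<omega>) = z}))
               0"
    (* moment conditions *)
    and X_mom: "integrable M (\<lambda>\<omega>. (norm (fX (W 0 \<omega>)))\<^sup>2)"
    and XY_mom: "\<And>l. integrable M (\<lambda>\<omega>. (norm ((Y 0 \<omega> $ l) *\<^sub>R fX (W 0 \<omega>)))\<^sup>2)"
    and var_pd: "\<And>z. z \<in> Zs \<Longrightarrow> posdef (cond_var M (\<lambda>\<omega>. fX (W 0 \<omega>)) (\<lambda>\<omega>. fZ (W 0 \<omega>)) z)"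
  shows "\<forall>z\<in>Zs. \<forall>t.
     conv_in_prob M
       (\<lambda>n \<omega>. betahat_t (\<lambda>i. I n i \<omega>) (\<lambda>i. fZ (W i \<omega>)) (\<lambda>i. fX (W i \<omega>)) (\<lambda>i. Y i \<omega> $ I n i \<omega>) n t z)
       (matrix_inv (cond_var M (\<lambda>\<omega>. fX (W 0 \<omega>)) (\<lambda>\<omega>. fZ (W 0 \<omega>)) z)
          *v cond_cov M (\<lambda>\<omega>. fX (W 0 \<omega>)) (\<lambda>\<omega>. Y 0 \<omega> $ t) (\<lambda>\<omega>. fZ (W 0 \<omega>)) z)
   \<and> conv_in_prob M
       (\<lambda>n \<omega>. betahat (\<lambda>i. I n i \<omega>) (\<lambda>i. fZ (W i \<omega>)) (\<lambda>i. fX (W i \<omega>)) (\<lambda>i. Y i \<omega> $ I n i \<omega>) n z)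
       (\<Sum>l\<in>UNIV. \<pi> l *\<^sub>R (matrix_inv (cond_var M (\<lambda>\<omega>. fX (W 0 \<omega>)) (\<lambda>\<omega>. fZ (W 0 \<omega>)) z)
          *v cond_cov M (\<lambda>\<omega>. fX (W 0 \<omega>)) (\<lambda>\<omega>. Y 0 \<omega> $ l) (\<lambda>\<omega>. fZ (W 0 \<omega>)) z))"
proof -
  interpret prob_space M
    by (rule P)
  interpret stratified_trial M MW Y W fZ fX Zs I \<pi>
    by unfold_locales (use fZ_meas fX_meas Zs_fin fZ_Zs I_meas C1_indep C1_ident C2 C3_D in auto)
  show ?thesis
    using pi_pos pi_sum
    by (auto intro!: betahat_t_consistent betahat_consistent X_mom C1_mom XY_mom var_pd)
qed

end
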